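(* Let $\Omega\subset\mathbb{R}^2$, the constants $\theta>0$, $U>0$, $g$, $\gamma$, $\alpha$, $k\ge 1$, $\beta>0$, the function $\nu$, the data $\mathbf{f}$, $\mathbf{u}_0$, $c_0$, the finite element spaces $\mathbf{V}_h, M_h,\tilde H_h$ and the time step $\tau=T/N$ be as in the context, and let $(\mathbf{u}_h^n,p_h^n,c_h^n)_{0\le n\le N}$ be computed by the decoupled BDF2 finite element scheme described in the context. Assume the viscosity $\nu:\mathbb{R}\to\mathbb{R}$ is smooth and satisfies $$k^{-1}\le \nu(s)\le k,\qquad |\nu'(s)|\le \beta\qquad\forall s\in\mathbb{R}.$$ Then there is a constant $C>0$, independent of $\tau$ and $h$, such that for all $1\le m\le N-1$, $$\|\mathbf{u}_h^{m+1}\|_{L^2}^2+\|\hat{\mathbf{u}}_h^{m+1}\|_{L^2}^2+\|c_h^{m+1}\|_{L^2}^2+\|\hat c_h^{m+1}\|_{L^2}^2+2\tau k^{-1}\sum_{n=1}^{m}\|\nabla\mathbf{u}_h^{n+1}\|_{L^2}^2+2\tau\theta\sum_{n=1}^{m}\|\nabla c_h^{n+1}\|_{L^2}^2$$ $$\le \|\mathbf{u}_h^{1}\|_{L^2}^2+\|\hat{\mathbf{u}}_h^{1}\|_{L^2}^2+\|c_h^{1}\|_{L^2}^2+\|\hat c_h^{1}\|_{L^2}^2+C\tau\sum_{n=0}^{N-1}\big(\|\mathbf{f}^{n+1}\|_{L^2}^2+|\Omega|\big),$$ where $|\Omega|$ is the measure of $\Omega$.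
   Context: $\Omega\subset\mathbb{R}^2$ is a bounded domain with smooth boundary; $\mathbf{i}_2=(0,1)^T$; $x_2$ is the second coordinate. Spaces: $\mathbf{V}=H_0^1(\Omega)^2$, $M=L_0^2(\Omega)=\{q\in L^2(\Omega):\int_\Omega q\,dx=0\}$, $\tilde H=H^1(\Omega)\cap L_0^2(\Omega)$. Trilinear forms: $B(\mathbf{u},\mathbf{v},\mathbf{w})=\tfrac12\int_\Omega(\mathbf{u}\cdot\nabla\mathbf{v})\cdot\mathbf{w}\,dx-\tfrac12\int_\Omega(\mathbf{u}\cdot\nabla\mathbf{w})\cdot\mathbf{v}\,dx$ and $b(\mathbf{u},c,r)=\tfrac12\int_\Omega(\mathbf{u}\cdot\nabla c)r\,dx-\tfrac12\int_\Omega(\mathbf{u}\cdot\nabla r)c\,dx$; $(\cdot,\cdot)$ is the $L^2(\Omega)$ inner product. $\mathbf{f}\in L^\infty(0,T;L^2(\Omega)^2)$, $\mathbf{f}^n=\mathbf{f}(t_n)$; $\mathbf{u}_0\in H^2(\Omega)^2$ divergence-free with zero trace, $c_0\in\tilde H\cap H^2(\Omega)$. Time grid: $N\in\mathbb{N}$, $\tau=T/N$, $t_n=n\tau$. Notation: $D_\tau v^{n+1}=\frac{3v^{n+1}-4v^n+v^{n-1}}{2\tau}$, $d_\tau v^{1}=\frac{v^{1}-v^0}{\tau}$, $\hat v^n=2v^n-v^{n-1}$. Space discretization: $\mathcal{T}_h$ is a quasi-uniform triangulation of $\Omega$ with mesh size $h$; $\mathbf{V}_h=\{\mathbf{v}_h\in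 C(\bar\Omega)^2\cap\mathbf{V}:\mathbf{v}_h|_K\in(P_1(K)\oplus b(K))^2\ \forall K\in\mathcal{T}_h\}$ ($b(K)$ the cubic bubble; MINI element), $M_h=\{q_h\in C(\bar\Omega):q_h|_K\in P_1(K)\ \forall K,\ \int_\Omega q_h=0\}$, $\tilde H_h=\{r_h\in C(\bar\Omega)\cap\tilde H: r_h|_K\in P_1(K)\ \forall K\}$. Initial values $\mathbf{u}_h^0=\mathbf{I}_h\mathbf{u}_0$, $c_h^0=\Pi_hc_0$ (standard interpolants onto $\mathbf{V}_h$, $\tilde H_h$). Decoupled BDF2 scheme. Step I: find $(\mathbf{u}_h^1,p_h^1)\in\mathbf{V}_h\times M_h$ with, for all $(\mathbf{v}_h,q_h)\in\mathbf{V}_h\times M_h$, $(d_\tau\mathbf{u}_h^1,\mathbf{v}_h)+(\nu(c_h^0+\alpha)\nabla\mathbf{u}_h^1,\nabla\mathbf{v}_h)+B(\mathbf{u}_h^0,\mathbf{u}_h^1,\mathbf{v}_h)-(\nabla\cdot\mathbf{v}_h,p_h^1)+(\nabla\cdot\mathbf{u}_h^1,q_h)=-g((1+\gamma c_h^0)\mathbf{i}_2,\mathbf{v}_h)+(\mathbf{f}^1,\mathbf{v}_h)$, and $c_h^1\in\tilde H_h$ with, for all $r_h\in\tilde H_h$, $(d_\tau c_h^1,r_h)+\theta(\nabla c_h^1,\nabla r_h)+b(\mathbf{u}_h^0,c_h^1,r_h)-U(c_h^0,\partial r_h/\partial x_2)=U\alpha(1,\partial r_h/\partial x_2)$. Step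 II: for $n\ge1$, find $(\mathbf{u}_h^{n+1},p_h^{n+1})\in\mathbf{V}_h\times M_h$ with, for all $(\mathbf{v}_h,q_h)$, $(D_\tau\mathbf{u}_h^{n+1},\mathbf{v}_h)+(\nu(\hat c_h^n+\alpha)\nabla\mathbf{u}_h^{n+1},\nabla\mathbf{v}_h)+B(\hat{\mathbf{u}}_h^n,\mathbf{u}_h^{n+1},\mathbf{v}_h)-(\nabla\cdot\mathbf{v}_h,p_h^{n+1})+(\nabla\cdot\mathbf{u}_h^{n+1},q_h)=-g((1+\gamma\hat c_h^n)\mathbf{i}_2,\mathbf{v}_h)+(\mathbf{f}^{n+1},\mathbf{v}_h)$, and $c_h^{n+1}\in\tilde H_h$ with, for all $r_h\in\tilde H_h$, $(D_\tau c_h^{n+1},r_h)+\theta(\nabla c_h^{n+1},\nabla r_h)+b(\hat{\mathbf{u}}_h^n,c_h^{n+1},r_h)-U(\hat c_h^n,\partial r_h/\partial x_2)=U\alpha(1,\partial r_h/\partial x_2)$. *)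

theory Defs
  imports "HOL-Analysis.Analysis"
begin

type_synonym pt = "real^2"

section \<open>Derivatives (classical, taken where they exist; a.e. gradient of piecewise polynomials)\<close>

definition pd :: "2 \<Rightarrow> (pt \<Rightarrow> real) \<Rightarrow> pt \<Rightarrow> real" where
  "pd i f x = (if f differentiable (at x) then frechet_derivative f (at x) (axis i 1) else 0)"

definition pgrad :: "(pt \<Rightarrow> real) \<Rightarrow> pt \<Rightarrow> pt" where
  "pgrad f x = (\<chi> i. pd i f x)"

definition vcomp :: "(pt \<Rightarrow> pt) \<Rightarrow> 2 \<Rightarrow> pt \<Rightarrow> real" where
  "vcomp u i = (\<lambda>x. u x $ i)"

definition pdiv :: "(pt \<Rightarrow> pt) \<Rightarrow> pt \<Rightarrow> real" where
  "pdiv u x = (\<Sum>i\<in>UNIV. pd i (vcomp u i) x)"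

fun pderivs :: "2 list \<Rightarrow> (pt \<Rightarrow> real) \<Rightarrow> pt \<Rightarrow> real" where
  "pderivs [] f = f"
| "pderivs (i # is) f = pd i (pderivs is f)"

definition smooth_fun :: "(pt \<Rightarrow> real) \<Rightarrow> bool" where
  "smooth_fun \<phi> \<longleftrightarrow> (\<forall>is x. pderivs is \<phi> differentiable (at x))"

definition test_fun :: "pt set \<Rightarrow> (pt \<Rightarrow> real) \<Rightarrow> bool" where
  "test_fun \<Omega> \<phi> \<longleftrightarrow> smooth_fun \<phi> \<and> compact (closure {x. \<phi> x \<noteq> 0})
      \<and> closure {x. \<phi> x \<noteq> 0} \<subseteq> \<Omega>"

definition L2 :: "pt set \<Rightarrow> (pt \<Rightarrow> real) \<Rightarrow> bool" where
  "L2 \<Omega> f \<longleftrightarrow> set_borel_measurable lborel \<Omega> f \<and> set_integrable lborel \<Omega> (\<lambda>x. (f x)\<^sup>2)"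

definition weak_pd :: "pt set \<Rightarrow> (pt \<Rightarrow> real) \<Rightarrow> 2 \<Rightarrow> (pt \<Rightarrow> real) \<Rightarrow> bool" where
  "weak_pd \<Omega> f i g \<longleftrightarrow> (\<forall>\<phi>. test_fun \<Omega> \<phi> \<longrightarrow>
      (LINT x:\<Omega>|lborel. f x * pd i \<phi> x) = - (LINT x:\<Omega>|lborel. g x * \<phi> x))"

definition H1 :: "pt set \<Rightarrow> (pt \<Rightarrow> real) \<Rightarrow> bool" where
  "H1 \<Omega> f \<longleftrightarrow> L2 \<Omega> f \<and> (\<forall>i. \<exists>g. L2 \<Omega> g \<and> weak_pd \<Omega> f i g)"

definition H2 :: "pt set \<Rightarrow> (pt \<Rightarrow> real) \<Rightarrow> bool" where
  "H2 \<Omega> f \<longleftrightarrow> L2 \<Omega> f \<and> (\<forall>i. \<exists>g. H1 \<Omega> g \<and> weak_pd \<Omega> f i g)"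

definition ip :: "pt set \<Rightarrow> (pt \<Rightarrow> real) \<Rightarrow> (pt \<Rightarrow> real) \<Rightarrow> real" where
  "ip \<Omega> f g = (LINT x:\<Omega>|lborel. f x * g x)"

definition ipv :: "pt set \<Rightarrow> (pt \<Rightarrow> pt) \<Rightarrow> (pt \<Rightarrow> pt) \<Rightarrow> real" where
  "ipv \<Omega> u v = (LINT x:\<Omega>|lborel. u x \<bullet> v x)"

definition nrm2 :: "pt set \<Rightarrow> (pt \<Rightarrow> real) \<Rightarrow> real" where
  "nrm2 \<Omega> f = ip \<Omega> f f"

definition nrm2v :: "pt set \<Rightarrow> (pt \<Rightarrow> pt) \<Rightarrow> real" where
  "nrm2v \<Omega> u = ipv \<Omega> u u"

definition wgrad_v :: "pt set \<Rightarrow> (pt \<Rightarrow> real) \<Rightarrow> (pt \<Rightarrow> pt) \<Rightarrow> (pt \<Rightarrow> pt) \<Rightarrow> real" where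
  "wgrad_v \<Omega> w u v = (LINT x:\<Omega>|lborel. w x * (\<Sum>i\<in>UNIV. pgrad (vcomp u i) x \<bullet> pgrad (vcomp v i) x))"

definition grad_ip :: "pt set \<Rightarrow> (pt \<Rightarrow> real) \<Rightarrow> (pt \<Rightarrow> real) \<Rightarrow> real" where
  "grad_ip \<Omega> c r = (LINT x:\<Omega>|lborel. pgrad c x \<bullet> pgrad r x)"

definition gnrm2v :: "pt set \<Rightarrow> (pt \<Rightarrow> pt) \<Rightarrow> real" where
  "gnrm2v \<Omega> u = wgrad_v \<Omega> (\<lambda>_. 1) u u"

definition gnrm2 :: "pt set \<Rightarrow> (pt \<Rightarrow> real) \<Rightarrow> real" where
  "gnrm2 \<Omega> c = grad_ip \<Omega> c c"

definition conv :: "(pt \<Rightarrow> pt) \<Rightarrow> (pt \<Rightarrow> pt) \<Rightarrow> (pt \<Rightarrow> pt) \<Rightarrow> pt \<Rightarrow> real" where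
  "conv u v w x = (\<Sum>j\<in>UNIV. (u x \<bullet> pgrad (vcomp v j) x) * (w x $ j))"

definition Btri :: "pt set \<Rightarrow> (pt \<Rightarrow> pt) \<Rightarrow> (pt \<Rightarrow> pt) \<Rightarrow> (pt \<Rightarrow> pt) \<Rightarrow> real" where
  "Btri \<Omega> u v w = (1/2) * (LINT x:\<Omega>|lborel. conv u v w x)
                  - (1/2) * (LINT x:\<Omega>|lborel. conv u w v x)"

definition btri :: "pt set \<Rightarrow> (pt \<Rightarrow> pt) \<Rightarrow> (pt \<Rightarrow> real) \<Rightarrow> (pt \<Rightarrow> real) \<Rightarrow> real" where
  "btri \<Omega> u c r = (1/2) * (LINT x:\<Omega>|lborel. (u x \<bullet> pgrad c x) * r x)
                  - (1/2) * (LINT x:\<Omega>|lborel. (u x \<bullet> pgrad r x) * c x)"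

definition tri :: "pt \<times> pt \<times> pt \<Rightarrow> pt set" where
  "tri t = (case t of (a, b, c) \<Rightarrow> convex hull {a, b, c})"

definition tverts :: "pt \<times> pt \<times> pt \<Rightarrow> pt set" where
  "tverts t = (case t of (a, b, c) \<Rightarrow> {a, b, c})"

definition fe_triangulation :: "pt set \<Rightarrow> (pt \<times> pt \<times> pt) set \<Rightarrow> bool" where
  "fe_triangulation \<Omega> Tr \<longleftrightarrow> finite Tr \<and> Tr \<noteq> {}
     \<and> (\<forall>t\<in>Tr. \<not> collinear (tverts t))
     \<and> (\<Union>t\<in>Tr. tri t) = closure \<Omega>
     \<and> (\<forall>t\<in>Tr. \<forall>t'\<in>Tr. tverts t \<noteq> tverts t' \<longrightarrow>
            tri t \<inter> tri t' = convex hull (tverts t \<inter> tverts t'))"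

definition mesh_size :: "(pt \<times> pt \<times> pt) set \<Rightarrow> real" where
  "mesh_size Tr = Max ((\<lambda>t. diameter (tri t)) ` Tr)"

definition quasi_uniform :: "real \<Rightarrow> (pt \<times> pt \<times> pt) set \<Rightarrow> bool" where
  "quasi_uniform \<sigma> Tr \<longleftrightarrow> (\<forall>t\<in>Tr. \<exists>z. ball z (\<sigma> * mesh_size Tr) \<subseteq> tri t)"

definition cross2 :: "pt \<Rightarrow> pt \<Rightarrow> real" where
  "cross2 v w = v $ 1 * w $ 2 - v $ 2 * w $ 1"

definition bary :: "pt \<Rightarrow> pt \<Rightarrow> pt \<Rightarrow> pt \<Rightarrow> real" where
  "bary a b c x = cross2 (b - x) (c - x) / cross2 (b - a) (c - a)"

definition bubble :: "pt \<times> pt \<times> pt \<Rightarrow> pt \<Rightarrow> real" where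
  "bubble t x = (case t of (a, b, c) \<Rightarrow> bary a b c x * bary b c a x * bary c a b x)"

definition P1b_on :: "pt \<times> pt \<times> pt \<Rightarrow> (pt \<Rightarrow> real) \<Rightarrow> bool" where
  "P1b_on t f \<longleftrightarrow> (\<exists>w d e. \<forall>x\<in>tri t. f x = w \<bullet> x + d + e * bubble t x)"

definition P1_on :: "pt \<times> pt \<times> pt \<Rightarrow> (pt \<Rightarrow> real) \<Rightarrow> bool" where
  "P1_on t f \<longleftrightarrow> (\<exists>w d. \<forall>x\<in>tri t. f x = w \<bullet> x + d)"

definition Vh :: "pt set \<Rightarrow> (pt \<times> pt \<times> pt) set \<Rightarrow> (pt \<Rightarrow> pt) set" where
  "Vh \<Omega> Tr = {v. continuous_on (closure \<Omega>) v \<and> (\<forall>x\<in>frontier \<Omega>. v x = 0)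
                  \<and> (\<forall>t\<in>Tr. \<forall>i. P1b_on t (vcomp v i))}"

definition Mh :: "pt set \<Rightarrow> (pt \<times> pt \<times> pt) set \<Rightarrow> (pt \<Rightarrow> real) set" where
  "Mh \<Omega> Tr = {q. continuous_on (closure \<Omega>) q \<and> (\<forall>t\<in>Tr. P1_on t q)
                  \<and> (LINT x:\<Omega>|lborel. q x) = 0}"

definition Hh :: "pt set \<Rightarrow> (pt \<times> pt \<times> pt) set \<Rightarrow> (pt \<Rightarrow> real) set" where
  "Hh \<Omega> Tr = {r. continuous_on (closure \<Omega>) r \<and> (\<forall>t\<in>Tr. P1_on t r)
                  \<and> (LINT x:\<Omega>|lborel. r x) = 0}"

definition p1_interp :: "(pt \<times> pt \<times> pt) set \<Rightarrow> (pt \<Rightarrow> real) \<Rightarrow> pt \<Rightarrow> real" where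
  "p1_interp Tr w x = (if \<exists>t\<in>Tr. x \<in> tri t then
      (case (SOME t. t \<in> Tr \<and> x \<in> tri t) of (a, b, c) \<Rightarrow>
         w a * bary a b c x + w b * bary b c a x + w c * bary c a b x)
    else 0)"

definition Ih :: "(pt \<times> pt \<times> pt) set \<Rightarrow> (pt \<Rightarrow> pt) \<Rightarrow> pt \<Rightarrow> pt" where
  "Ih Tr w x = (\<chi> i. p1_interp Tr (vcomp w i) x)"

definition Pih :: "pt set \<Rightarrow> (pt \<times> pt \<times> pt) set \<Rightarrow> (pt \<Rightarrow> real) \<Rightarrow> pt \<Rightarrow> real" where
  "Pih \<Omega> Tr w x = p1_interp Tr w x
      - (LINT y:\<Omega>|lborel. p1_interp Tr w y) / measure lborel \<Omega>"

definition hatv :: "(nat \<Rightarrow> pt \<Rightarrow> pt) \<Rightarrow> nat \<Rightarrow> pt \<Rightarrow> pt" where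
  "hatv u n = (\<lambda>x. 2 *\<^sub>R u n x - u (n - 1) x)"

definition hats :: "(nat \<Rightarrow> pt \<Rightarrow> real) \<Rightarrow> nat \<Rightarrow> pt \<Rightarrow> real" where
  "hats c n = (\<lambda>x. 2 * c n x - c (n - 1) x)"

definition bdf2_solution ::
  "pt set \<Rightarrow> (real \<Rightarrow> real) \<Rightarrow> real \<Rightarrow> real \<Rightarrow> real \<Rightarrow> real \<Rightarrow> real \<Rightarrow>
   (real \<Rightarrow> pt \<Rightarrow> pt) \<Rightarrow> (pt \<Rightarrow> pt) \<Rightarrow> (pt \<Rightarrow> real) \<Rightarrow> real \<Rightarrow>
   (pt \<times> pt \<times> pt) set \<Rightarrow> nat \<Rightarrow>
   (nat \<Rightarrow> pt \<Rightarrow> pt) \<Rightarrow> (nat \<Rightarrow> pt \<Rightarrow> real) \<Rightarrow> (nat \<Rightarrow> pt \<Rightarrow> real) \<Rightarrow> bool" where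
  "bdf2_solution \<Omega> \<nu> \<alpha> \<theta> U g \<gamma> f u0 c0 T Tr N u p c \<longleftrightarrow>
    (let \<tau> = T / real N in
     (\<forall>n\<le>N. u n \<in> Vh \<Omega> Tr \<and> c n \<in> Hh \<Omega> Tr)
   \<and> (\<forall>n\<in>{1..N}. p n \<in> Mh \<Omega> Tr)
   \<and> u 0 = Ih Tr u0 \<and> c 0 = Pih \<Omega> Tr c0
   \<comment> \<open>Step I\<close>
   \<and> (\<forall>v\<in>Vh \<Omega> Tr. \<forall>q\<in>Mh \<Omega> Tr.
        ipv \<Omega> (\<lambda>x. (1 / \<tau>) *\<^sub>R (u 1 x - u 0 x)) v
        + wgrad_v \<Omega> (\<lambda>x. \<nu> (c 0 x + \<alpha>)) (u 1) v
        + Btri \<Omega> (u 0) (u 1) v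
        - ip \<Omega> (pdiv v) (p 1) + ip \<Omega> (pdiv (u 1)) q
        = - g * ip \<Omega> (\<lambda>x. 1 + \<gamma> * c 0 x) (vcomp v 2) + ipv \<Omega> (f (1 * \<tau>)) v)
   \<and> (\<forall>r\<in>Hh \<Omega> Tr.
        ip \<Omega> (\<lambda>x. (c 1 x - c 0 x) / \<tau>) r + \<theta> * grad_ip \<Omega> (c 1) r
        + btri \<Omega> (u 0) (c 1) r - U * ip \<Omega> (c 0) (pd 2 r)
        = U * \<alpha> * ip \<Omega> (\<lambda>x. 1) (pd 2 r))
   \<comment> \<open>Step II, n = 1, ..., N-1\<close>
   \<and> (\<forall>n. 1 \<le> n \<and> n + 1 \<le> N \<longrightarrow>
        (\<forall>v\<in>Vh \<Omega> Tr. \<forall>q\<in>Mh \<Omega> Tr.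
          ipv \<Omega> (\<lambda>x. (1 / (2 * \<tau>)) *\<^sub>R (3 *\<^sub>R u (n + 1) x - 4 *\<^sub>R u n x + u (n - 1) x)) v
          + wgrad_v \<Omega> (\<lambda>x. \<nu> (hats c n x + \<alpha>)) (u (n + 1)) v
          + Btri \<Omega> (hatv u n) (u (n + 1)) v
          - ip \<Omega> (pdiv v) (p (n + 1)) + ip \<Omega> (pdiv (u (n + 1))) q
          = - g * ip \<Omega> (\<lambda>x. 1 + \<gamma> * hats c n x) (vcomp v 2)
            + ipv \<Omega> (f (real (n + 1) * \<tau>)) v)
      \<and> (\<forall>r\<in>Hh \<Omega> Tr.
          ip \<Omega> (\<lambda>x. (3 * c (n + 1) x - 4 * c n x + c (n - 1) x) / (2 * \<tau>)) r
          + \<theta> * grad_ip \<Omega> (c (n + 1)) r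
          + btri \<Omega> (hatv u n) (c (n + 1)) r - U * ip \<Omega> (hats c n) (pd 2 r)
          = U * \<alpha> * ip \<Omega> (\<lambda>x. 1) (pd 2 r))))"

end

theory Submission
  imports Defs
begin

(* Testing the concentration equation with c^(n+1) and the momentum equation with
   (u^(n+1), p^(n+1)) removes the skew-symmetric convection terms and the pressure.  By the
   identity 2 (3a - 4b + e).a = |a|^2 + |2a - b|^2 - |b|^2 - |2b - e|^2 + |a - 2b + e|^2, the BDF2
   quotient is a telescoping difference of the energies |v^n|^2 + |2 v^n - v^(n-1)|^2 plus a
   nonnegative term.  Young's inequality splits the coupling term U (hat c^n + alpha, d_2 c^(n+1)),
   the buoyancy and the forcing; diffusion and the lower viscosity bound 1/k absorb the gradient
   parts.  No Poincare inequality is used for the velocity: the forcing is paid for with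
   |u^(n+1)|^2 at the weight tau / (2 (1 + tau)) < min (1/2, tau/2), which is absorbed for every
   step size.  A discrete Gronwall argument bounds first the concentration energies, hence the
   buoyancy, and then the velocity energies.  The interpolated initial data are bounded by the
   sup norms of u0 and c0, so all constants are independent of tau and h.  Gradients of finite
   element functions are piecewise constant, hence bounded and measurable, which makes every
   integral of the scheme finite. *)

section \<open>Bounded measurable functions on a domain\<close>

definition bounded_measurable_on :: "'a::euclidean_space set \<Rightarrow> ('a \<Rightarrow> 'b::real_normed_vector) \<Rightarrow> bool" where
  "bounded_measurable_on \<Omega> f \<longleftrightarrow> f \<in> borel_measurable (restrict_space lborel \<Omega>) \<and> bounded (f ` \<Omega>)"

lemma bounded_measurable_on_const: "bounded_measurable_on \<Omega> (\<lambda>x. c)"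
  by (auto simp: bounded_measurable_on_def image_constant_conv)

lemma bounded_measurable_on_bounded_linear:
  assumes "bounded_linear L" "bounded_measurable_on \<Omega> f"
  shows "bounded_measurable_on \<Omega> (\<lambda>x. L (f x))"
  using assms bounded_linear_image[of "f ` \<Omega>" L]
    measurable_compose[OF _ borel_measurable_continuous_onI[OF linear_continuous_on]]
  by (auto simp: bounded_measurable_on_def image_image)

lemma bounded_measurable_on_bounded_bilinear:
  fixes prod :: "'b::euclidean_space \<Rightarrow> 'c::euclidean_space \<Rightarrow> 'd::euclidean_space"
  assumes prod: "bounded_bilinear prod" and f: "bounded_measurable_on \<Omega> f" and g: "bounded_measurable_on \<Omega> g"
  shows "bounded_measurable_on \<Omega> (\<lambda>x. prod (f x) (g x))"
proof -
  obtain K where K: "\<And>a b. norm (prod a b) \<le> norm a * norm b * K" and "K > 0"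
    using bounded_bilinear.pos_bounded[OF prod] by blast
  obtain A B where A: "\<And>x. x \<in> \<Omega> \<Longrightarrow> norm (f x) \<le> A" and B: "\<And>x. x \<in> \<Omega> \<Longrightarrow> norm (g x) \<le> B"
    using f g by (auto simp: bounded_measurable_on_def bounded_iff)
  have "norm (prod (f x) (g x)) \<le> A * B * K" if "x \<in> \<Omega>" for x
  proof -
    have "0 \<le> A" using A[OF that] norm_ge_zero order_trans by blast
    then have "norm (f x) * norm (g x) * K \<le> A * B * K"
      using A[OF that] B[OF that] \<open>K > 0\<close> by (intro mult_right_mono mult_mono) auto
    then show ?thesis using K[of "f x" "g x"] by linarith
  qed
  then have "bounded ((\<lambda>x. prod (f x) (g x)) ` \<Omega>)" by (auto simp: bounded_iff)
  moreover have "continuous_on UNIV (\<lambda>x. prod (fst x) (snd x))"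
    by (intro bounded_bilinear.continuous_on[OF prod] continuous_on_fst continuous_on_snd continuous_on_id)
  with f g have "(\<lambda>x. prod (f x) (g x)) \<in> borel_measurable (restrict_space lborel \<Omega>)"
    unfolding bounded_measurable_on_def by (blast intro: borel_measurable_continuous_Pair[where H=prod])
  ultimately show ?thesis unfolding bounded_measurable_on_def by blast
qed

lemma bounded_measurable_on_add:
  fixes f g :: "'a::euclidean_space \<Rightarrow> 'b::euclidean_space"
  assumes "bounded_measurable_on \<Omega> f" "bounded_measurable_on \<Omega> g"
  shows "bounded_measurable_on \<Omega> (\<lambda>x. f x + g x)"
  using assms unfolding bounded_measurable_on_def by (simp add: bounded_plus_comp borel_measurable_add)

lemma bounded_measurable_on_diff:
  fixes f g :: "'a::euclidean_space \<Rightarrow> 'b::euclidean_space"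
  assumes "bounded_measurable_on \<Omega> f" "bounded_measurable_on \<Omega> g"
  shows "bounded_measurable_on \<Omega> (\<lambda>x. f x - g x)"
  using assms unfolding bounded_measurable_on_def by (simp add: bounded_minus_comp borel_measurable_diff)

lemmas bounded_measurable_on_scaleR = bounded_measurable_on_bounded_bilinear[OF bounded_bilinear_scaleR]
lemmas bounded_measurable_on_mult = bounded_measurable_on_bounded_bilinear[OF bounded_bilinear_mult]
lemmas bounded_measurable_on_inner = bounded_measurable_on_bounded_bilinear[OF bounded_bilinear_inner]
lemmas bounded_measurable_on_vec_nth = bounded_measurable_on_bounded_linear[OF bounded_linear_vec_nth]

lemma bounded_measurable_on_continuous:
  fixes f :: "'a::euclidean_space \<Rightarrow> 'b::euclidean_space"
  assumes "bounded \<Omega>" "continuous_on (closure \<Omega>) f"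
  shows "bounded_measurable_on \<Omega> f"
proof -
  have "f \<in> borel_measurable (restrict_space borel \<Omega>)"
    by (rule borel_measurable_continuous_on_restrict[OF continuous_on_subset[OF assms(2) closure_subset]])
  then have "f \<in> borel_measurable (restrict_space lborel \<Omega>)"
    by (subst measurable_cong_sets[OF sets_restrict_space_cong[OF sets_lborel] refl])
  moreover have "bounded (f ` closure \<Omega>)"
    using assms by (intro compact_imp_bounded compact_continuous_image) (auto simp: compact_closure)
  then have "bounded (f ` \<Omega>)"
    by (rule bounded_subset) (intro image_mono closure_subset)
  ultimately show ?thesis unfolding bounded_measurable_on_def ..
qed

lemma bounded_measurable_on_set_integrable:
  fixes f :: "'a::euclidean_space \<Rightarrow> 'b::euclidean_space"
  assumes \<Omega>: "\<Omega> \<in> fmeasurable lborel" and f: "bounded_measurable_on \<Omega> f"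
  shows "set_integrable lborel \<Omega> f"
proof -
  obtain B where B: "\<And>x. x \<in> \<Omega> \<Longrightarrow> norm (f x) \<le> B"
    using f by (auto simp: bounded_measurable_on_def bounded_iff)
  have space: "space (restrict_space lborel \<Omega>) = \<Omega>" by (simp add: space_restrict_space)
  have "integrable (restrict_space lborel \<Omega>) f"
  proof (rule integrableI_bounded_set[where A = \<Omega> and B = B])
    show "\<Omega> \<in> sets (restrict_space lborel \<Omega>)"
      using sets.top[of "restrict_space lborel \<Omega>"] by (simp only: space)
    show "emeasure (restrict_space lborel \<Omega>) \<Omega> < \<infinity>"
      using \<Omega> by (simp add: emeasure_restrict_space fmeasurable_def)
    show "f \<in> borel_measurable (restrict_space lborel \<Omega>)"
      using f by (simp add: bounded_measurable_on_def)
    show "AE x in restrict_space lborel \<Omega>. x \<in> \<Omega> \<longrightarrow> norm (f x) \<le> B"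
      by (intro AE_I2) (simp add: B)
    show "AE x in restrict_space lborel \<Omega>. x \<notin> \<Omega> \<longrightarrow> f x = 0"
      by (intro AE_I2) (simp add: space)
  qed
  then show ?thesis using set_integrable_eq[of \<Omega> lborel f] fmeasurableD[OF \<Omega>] by simp
qed

lemma bounded_measurable_on_inner_integrable:
  fixes f :: "'a::euclidean_space \<Rightarrow> 'b::euclidean_space"
  assumes "\<Omega> \<in> fmeasurable lborel" "bounded_measurable_on \<Omega> f" "bounded_measurable_on \<Omega> g"
  shows "set_integrable lborel \<Omega> (\<lambda>x. f x \<bullet> g x)"
  using assms by (intro bounded_measurable_on_set_integrable bounded_measurable_on_inner)

lemma set_integral_nonneg_on:
  fixes f :: "'a \<Rightarrow> real"
  assumes "\<And>x. x \<in> A \<Longrightarrow> 0 \<le> f x"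
  shows "0 \<le> (LINT x:A|M. f x)"
  unfolding set_lebesgue_integral_def
  by (rule integral_nonneg_AE) (use assms in \<open>auto simp: indicator_def\<close>)

lemma set_integral_le_integrable_bound:
  fixes f g :: "'a \<Rightarrow> real"
  assumes g: "set_integrable M A g" and le: "\<And>x. x \<in> A \<Longrightarrow> f x \<le> g x"
    and nonneg: "\<And>x. x \<in> A \<Longrightarrow> 0 \<le> g x"
  shows "(LINT x:A|M. f x) \<le> (LINT x:A|M. g x)"
proof (cases "set_integrable M A f")
  case True
  then show ?thesis using g le by (rule set_integral_mono)
next
  case False
  then have "(LINT x:A|M. f x) = 0"
    by (simp add: set_integrable_def set_lebesgue_integral_def not_integrable_integral_eq)
  then show ?thesis using set_integral_nonneg_on[OF nonneg] by simp
qed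

lemma set_integral_le_const:
  fixes f :: "'a::euclidean_space \<Rightarrow> real"
  assumes \<Omega>: "\<Omega> \<in> fmeasurable lborel" and K: "0 \<le> K" "\<And>x. x \<in> \<Omega> \<Longrightarrow> f x \<le> K"
  shows "(LINT x:\<Omega>|lborel. f x) \<le> K * measure lborel \<Omega>"
proof -
  have "(LINT x:\<Omega>|lborel. f x) \<le> (LINT x:\<Omega>|lborel. K)"
    using \<Omega> K by (intro set_integral_le_integrable_bound bounded_measurable_on_set_integrable
        bounded_measurable_on_const)
  also have "\<dots> = K * measure lborel \<Omega>"
    using fmeasurableD[OF \<Omega>] fmeasurableD2[OF \<Omega>] by (simp add: set_integral_const)
  finally show ?thesis .
qed

lemma young_inner:
  fixes x y :: "'a::real_inner"
  assumes "\<epsilon> > 0"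
  shows "a * (x \<bullet> y) \<le> a\<^sup>2 / (2 * \<epsilon>) * (x \<bullet> x) + \<epsilon> / 2 * (y \<bullet> y)"
proof -
  have "0 \<le> (a *\<^sub>R x - \<epsilon> *\<^sub>R y) \<bullet> (a *\<^sub>R x - \<epsilon> *\<^sub>R y) / (2 * \<epsilon>)"
    using assms by simp
  also have "\<dots> = a\<^sup>2 / (2 * \<epsilon>) * (x \<bullet> x) + \<epsilon> / 2 * (y \<bullet> y) - a * (x \<bullet> y)"
    using assms by (simp add: inner_diff_left inner_diff_right inner_commute field_simps power2_eq_square)
  finally show ?thesis by simp
qed

lemma young_set_integral:
  fixes f g :: "'a \<Rightarrow> 'b::real_inner"
  assumes "\<epsilon> > 0"
    and f: "set_integrable M A (\<lambda>x. f x \<bullet> f x)" and g: "set_integrable M A (\<lambda>x. g x \<bullet> g x)"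
  shows "a * (LINT x:A|M. f x \<bullet> g x)
    \<le> a\<^sup>2 / (2 * \<epsilon>) * (LINT x:A|M. f x \<bullet> f x) + \<epsilon> / 2 * (LINT x:A|M. g x \<bullet> g x)"
proof -
  have "a * (LINT x:A|M. f x \<bullet> g x) = (LINT x:A|M. a * (f x \<bullet> g x))" by simp
  also have "\<dots> \<le> (LINT x:A|M. a\<^sup>2 / (2 * \<epsilon>) * (f x \<bullet> f x) + \<epsilon> / 2 * (g x \<bullet> g x))"
    using f g young_inner[OF assms(1)] assms(1)
    by (intro set_integral_le_integrable_bound) auto
  also have "\<dots> = a\<^sup>2 / (2 * \<epsilon>) * (LINT x:A|M. f x \<bullet> f x) + \<epsilon> / 2 * (LINT x:A|M. g x \<bullet> g x)"
    using f g by simp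
  finally show ?thesis .
qed

lemma euler_inner_identity:
  fixes a b :: "'a::real_inner"
  shows "2 * ((a - b) \<bullet> a) = a \<bullet> a - b \<bullet> b + (a - b) \<bullet> (a - b)"
  by (simp add: inner_diff_left inner_diff_right inner_commute algebra_simps)

lemma bdf2_inner_identity:
  fixes a b e :: "'a::real_inner"
  shows "2 * ((3 *\<^sub>R a - 4 *\<^sub>R b + e) \<bullet> a) = a \<bullet> a + (2 *\<^sub>R a - b) \<bullet> (2 *\<^sub>R a - b) - b \<bullet> b
    - (2 *\<^sub>R b - e) \<bullet> (2 *\<^sub>R b - e) + (a - 2 *\<^sub>R b + e) \<bullet> (a - 2 *\<^sub>R b + e)"
  by (simp add: inner_diff_left inner_diff_right inner_add_left inner_add_right inner_commute algebra_simps)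

lemma euler_set_integral_identity:
  fixes a b :: "'a::euclidean_space \<Rightarrow> 'b::euclidean_space"
  assumes \<Omega>: "\<Omega> \<in> fmeasurable lborel" and a: "bounded_measurable_on \<Omega> a"
    and b: "bounded_measurable_on \<Omega> b"
  shows "(LINT x:\<Omega>|lborel. (\<kappa> *\<^sub>R (a x - b x)) \<bullet> a x)
    = \<kappa> / 2 * ((LINT x:\<Omega>|lborel. a x \<bullet> a x) - (LINT x:\<Omega>|lborel. b x \<bullet> b x)
        + (LINT x:\<Omega>|lborel. (a x - b x) \<bullet> (a x - b x)))"
proof -
  have "(LINT x:\<Omega>|lborel. (\<kappa> *\<^sub>R (a x - b x)) \<bullet> a x)
    = (LINT x:\<Omega>|lborel. \<kappa> / 2 * (a x \<bullet> a x - b x \<bullet> b x + (a x - b x) \<bullet> (a x - b x)))"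
    by (simp add: euler_inner_identity[symmetric])
  also have "\<dots> = \<kappa> / 2 * ((LINT x:\<Omega>|lborel. a x \<bullet> a x) - (LINT x:\<Omega>|lborel. b x \<bullet> b x)
        + (LINT x:\<Omega>|lborel. (a x - b x) \<bullet> (a x - b x)))"
  proof -
    have "set_integrable lborel \<Omega> (\<lambda>x. a x \<bullet> a x)" "set_integrable lborel \<Omega> (\<lambda>x. b x \<bullet> b x)"
      "set_integrable lborel \<Omega> (\<lambda>x. (a x - b x) \<bullet> (a x - b x))"
      by (intro bounded_measurable_on_inner_integrable[OF \<Omega>] bounded_measurable_on_diff a b)+
    then show ?thesis by simp
  qed
  finally show ?thesis .
qed

lemma bdf2_set_integral_identity:
  fixes a b e :: "'a::euclidean_space \<Rightarrow> 'b::euclidean_space"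
  assumes \<Omega>: "\<Omega> \<in> fmeasurable lborel" and a: "bounded_measurable_on \<Omega> a"
    and b: "bounded_measurable_on \<Omega> b" and e: "bounded_measurable_on \<Omega> e"
  shows "(LINT x:\<Omega>|lborel. (\<kappa> *\<^sub>R (3 *\<^sub>R a x - 4 *\<^sub>R b x + e x)) \<bullet> a x)
    = \<kappa> / 2 * ((LINT x:\<Omega>|lborel. a x \<bullet> a x)
        + (LINT x:\<Omega>|lborel. (2 *\<^sub>R a x - b x) \<bullet> (2 *\<^sub>R a x - b x))
        - (LINT x:\<Omega>|lborel. b x \<bullet> b x)
        - (LINT x:\<Omega>|lborel. (2 *\<^sub>R b x - e x) \<bullet> (2 *\<^sub>R b x - e x))
        + (LINT x:\<Omega>|lborel. (a x - 2 *\<^sub>R b x + e x) \<bullet> (a x - 2 *\<^sub>R b x + e x)))"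
proof -
  note bmo = bounded_measurable_on_add bounded_measurable_on_diff bounded_measurable_on_scaleR
    bounded_measurable_on_const a b e
  have "(LINT x:\<Omega>|lborel. (\<kappa> *\<^sub>R (3 *\<^sub>R a x - 4 *\<^sub>R b x + e x)) \<bullet> a x)
    = (LINT x:\<Omega>|lborel. \<kappa> / 2 * (a x \<bullet> a x + (2 *\<^sub>R a x - b x) \<bullet> (2 *\<^sub>R a x - b x) - b x \<bullet> b x
        - (2 *\<^sub>R b x - e x) \<bullet> (2 *\<^sub>R b x - e x) + (a x - 2 *\<^sub>R b x + e x) \<bullet> (a x - 2 *\<^sub>R b x + e x)))"
    by (simp add: bdf2_inner_identity[symmetric])
  also have "\<dots> = \<kappa> / 2 * ((LINT x:\<Omega>|lborel. a x \<bullet> a x)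
        + (LINT x:\<Omega>|lborel. (2 *\<^sub>R a x - b x) \<bullet> (2 *\<^sub>R a x - b x))
        - (LINT x:\<Omega>|lborel. b x \<bullet> b x)
        - (LINT x:\<Omega>|lborel. (2 *\<^sub>R b x - e x) \<bullet> (2 *\<^sub>R b x - e x))
        + (LINT x:\<Omega>|lborel. (a x - 2 *\<^sub>R b x + e x) \<bullet> (a x - 2 *\<^sub>R b x + e x)))"
  proof -
    have "set_integrable lborel \<Omega> (\<lambda>x. a x \<bullet> a x)"
      "set_integrable lborel \<Omega> (\<lambda>x. (2 *\<^sub>R a x - b x) \<bullet> (2 *\<^sub>R a x - b x))"
      "set_integrable lborel \<Omega> (\<lambda>x. b x \<bullet> b x)"
      "set_integrable lborel \<Omega> (\<lambda>x. (2 *\<^sub>R b x - e x) \<bullet> (2 *\<^sub>R b x - e x))"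
      "set_integrable lborel \<Omega> (\<lambda>x. (a x - 2 *\<^sub>R b x + e x) \<bullet> (a x - 2 *\<^sub>R b x + e x))"
      by (intro bounded_measurable_on_inner_integrable[OF \<Omega>] bmo)+
    then show ?thesis by simp
  qed
  finally show ?thesis .
qed

lemma extrapolation_set_integral_le:
  fixes a b :: "'a::euclidean_space \<Rightarrow> 'b::euclidean_space"
  assumes \<Omega>: "\<Omega> \<in> fmeasurable lborel" and a: "bounded_measurable_on \<Omega> a"
    and b: "bounded_measurable_on \<Omega> b"
  shows "(LINT x:\<Omega>|lborel. (2 *\<^sub>R a x - b x) \<bullet> (2 *\<^sub>R a x - b x))
    \<le> 8 * (LINT x:\<Omega>|lborel. a x \<bullet> a x) + 2 * (LINT x:\<Omega>|lborel. b x \<bullet> b x)"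
proof -
  have ia: "set_integrable lborel \<Omega> (\<lambda>x. a x \<bullet> a x)" and ib: "set_integrable lborel \<Omega> (\<lambda>x. b x \<bullet> b x)"
    and iab: "set_integrable lborel \<Omega> (\<lambda>x. (2 *\<^sub>R a x - b x) \<bullet> (2 *\<^sub>R a x - b x))"
    by (intro bounded_measurable_on_inner_integrable[OF \<Omega>] bounded_measurable_on_diff
        bounded_measurable_on_scaleR bounded_measurable_on_const a b)+
  have "(2 *\<^sub>R a x - b x) \<bullet> (2 *\<^sub>R a x - b x) \<le> 8 * (a x \<bullet> a x) + 2 * (b x \<bullet> b x)" for x
  proof -
    have "0 \<le> (2 *\<^sub>R a x + b x) \<bullet> (2 *\<^sub>R a x + b x)" by simp
    then show ?thesis
      by (simp add: inner_add_left inner_add_right inner_diff_left inner_diff_right inner_commute)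
  qed
  then have "(LINT x:\<Omega>|lborel. (2 *\<^sub>R a x - b x) \<bullet> (2 *\<^sub>R a x - b x))
    \<le> (LINT x:\<Omega>|lborel. 8 * (a x \<bullet> a x) + 2 * (b x \<bullet> b x))"
    using ia ib iab by (intro set_integral_mono) auto
  also have "\<dots> = 8 * (LINT x:\<Omega>|lborel. a x \<bullet> a x) + 2 * (LINT x:\<Omega>|lborel. b x \<bullet> b x)"
    using ia ib by simp
  finally show ?thesis .
qed

lemma component_set_integral_le:
  fixes f :: "'a::euclidean_space \<Rightarrow> real^'n"
  assumes \<Omega>: "\<Omega> \<in> fmeasurable lborel" and f: "bounded_measurable_on \<Omega> f"
  shows "(LINT x:\<Omega>|lborel. f x $ i * f x $ i) \<le> (LINT x:\<Omega>|lborel. f x \<bullet> f x)"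
proof (rule set_integral_mono)
  show "set_integrable lborel \<Omega> (\<lambda>x. f x $ i * f x $ i)"
    by (intro bounded_measurable_on_set_integrable[OF \<Omega>] bounded_measurable_on_mult
        bounded_measurable_on_vec_nth f)
  show "set_integrable lborel \<Omega> (\<lambda>x. f x \<bullet> f x)"
    by (rule bounded_measurable_on_inner_integrable[OF \<Omega> f f])
  show "f x $ i * f x $ i \<le> f x \<bullet> f x" for x
    using power_mono[OF component_le_norm_cart[of "f x" i] abs_ge_zero, of 2]
    by (simp add: power2_eq_square flip: power2_norm_eq_inner)
qed

lemma weighted_set_integral_lower_bound:
  fixes w S :: "'a::euclidean_space \<Rightarrow> real"
  assumes \<Omega>: "\<Omega> \<in> sets lborel" and k: "k > 0" and w: "w \<in> borel_measurable (restrict_space lborel \<Omega>)"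
    and w_bounds: "\<And>x. x \<in> \<Omega> \<Longrightarrow> 1 / k \<le> w x \<and> w x \<le> k" and S: "\<And>x. 0 \<le> S x"
  shows "1 / k * (LINT x:\<Omega>|lborel. S x) \<le> (LINT x:\<Omega>|lborel. w x * S x)"
proof -
  have w_nonneg: "0 \<le> w x" if "x \<in> \<Omega>" for x
    using w_bounds[OF that] k by (smt (verit) divide_pos_pos)
  show ?thesis
  proof (cases "set_integrable lborel \<Omega> S")
    case True
    have S_int: "integrable (restrict_space lborel \<Omega>) S"
      using True \<Omega> by (simp add: set_integrable_eq)
    have "integrable (restrict_space lborel \<Omega>) (\<lambda>x. w x * S x)"
    proof (rule Bochner_Integration.integrable_bound)
      show "integrable (restrict_space lborel \<Omega>) (\<lambda>x. k * S x)"
        using S_int by simp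
      show "(\<lambda>x. w x * S x) \<in> borel_measurable (restrict_space lborel \<Omega>)"
        using w borel_measurable_integrable[OF S_int] by (rule borel_measurable_times)
      show "AE x in restrict_space lborel \<Omega>. norm (w x * S x) \<le> norm (k * S x)"
      proof (rule AE_I2)
        fix x assume "x \<in> space (restrict_space lborel \<Omega>)"
        then have x: "x \<in> \<Omega>" by (simp add: space_restrict_space)
        show "norm (w x * S x) \<le> norm (k * S x)"
          using w_bounds[OF x] w_nonneg[OF x] S[of x] k by (simp add: abs_mult mult_right_mono)
      qed
    qed
    then have "set_integrable lborel \<Omega> (\<lambda>x. w x * S x)"
      using \<Omega> by (simp add: set_integrable_eq)
    then have "(LINT x:\<Omega>|lborel. 1 / k * S x) \<le> (LINT x:\<Omega>|lborel. w x * S x)"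
      using True w_bounds S by (intro set_integral_mono mult_right_mono) auto
    then show ?thesis by simp
  next
    case False
    then have "(LINT x:\<Omega>|lborel. S x) = 0"
      by (simp add: set_integrable_def set_lebesgue_integral_def not_integrable_integral_eq)
    moreover have "0 \<le> (LINT x:\<Omega>|lborel. w x * S x)"
      using w_nonneg S by (intro set_integral_nonneg_on mult_nonneg_nonneg)
    ultimately show ?thesis by simp
  qed
qed

lemma nrm2_nonneg: "0 \<le> nrm2 \<Omega> f"
  unfolding nrm2_def ip_def by (rule set_integral_nonneg_on) simp

lemma nrm2v_nonneg: "0 \<le> nrm2v \<Omega> u"
  unfolding nrm2v_def ipv_def by (rule set_integral_nonneg_on) simp

lemma gnrm2_nonneg: "0 \<le> gnrm2 \<Omega> f"
  unfolding gnrm2_def grad_ip_def by (rule set_integral_nonneg_on) simp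

lemma gnrm2v_nonneg: "0 \<le> gnrm2v \<Omega> u"
  unfolding gnrm2v_def wgrad_v_def by (rule set_integral_nonneg_on) (simp add: sum_nonneg)

section \<open>Piecewise affine functions on a triangulation\<close>

lemma cross2_not_collinear:
  assumes "\<not> collinear {a, b, c::pt}"
  shows "cross2 (b - a) (c - a) \<noteq> 0"
proof
  assume h: "cross2 (b - a) (c - a) = 0"
  have "collinear {0, b - a, c - a}"
  proof (cases "b - a = 0")
    case True
    then show ?thesis by (simp add: collinear_lemma)
  next
    case False
    define x where "x = b - a"
    define y where "y = c - a"
    have h2: "x $ 1 * y $ 2 = x $ 2 * y $ 1" using h unfolding cross2_def x_def y_def by simp
    have nz: "x \<bullet> x \<noteq> 0" using False x_def by simp
    have xx: "x \<bullet> x = x$1*x$1 + x$2*x$2" "y \<bullet> x = y$1*x$1 + y$2*x$2"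
      by (simp_all add: inner_vec_def sum_2)
    have "y $ i = ((y \<bullet> x) / (x \<bullet> x)) * x $ i" for i
    proof -
      have "y $ i * (x \<bullet> x) = (y \<bullet> x) * x $ i"
        using exhaust_2[of i] h2 unfolding xx by (auto simp: algebra_simps)
      then show ?thesis using nz by (simp add: field_simps)
    qed
    then have "y = ((y \<bullet> x) / (x \<bullet> x)) *\<^sub>R x" by (simp add: vec_eq_iff)
    then show ?thesis unfolding collinear_lemma x_def y_def by blast
  qed
  then have "collinear {b, a, c}" by (subst collinear_3) auto
  moreover have "{b, a, c} = {a, b, c}" by auto
  ultimately show False using assms by simp
qed

lemma cross2_decomposition:
  fixes p q e :: pt
  assumes "cross2 p q \<noteq> 0"
  shows "e = (cross2 e q / cross2 p q) *\<^sub>R p + (cross2 p e / cross2 p q) *\<^sub>R q"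
proof -
  have "e $ i = (cross2 e q / cross2 p q) * p $ i + (cross2 p e / cross2 p q) * q $ i" for i
  proof -
    have "e $ i * cross2 p q = cross2 e q * p $ i + cross2 p e * q $ i"
      using exhaust_2[of i] by (auto simp: cross2_def algebra_simps)
    then show ?thesis using assms by (simp add: field_simps)
  qed
  then show ?thesis by (simp add: vec_eq_iff)
qed

lemma derivative_of_affine_on_convex:
  fixes r :: "'a::real_inner \<Rightarrow> real"
  assumes K: "convex K" "x \<in> K" "v \<in> K" and aff: "\<forall>y\<in>K. r y = w \<bullet> y + d"
    and D: "(r has_derivative D) (at x)"
  shows "D (v - x) = w \<bullet> (v - x)"
proof -
  define \<gamma> where "\<gamma> = (\<lambda>s::real. x + s *\<^sub>R (v - x))"
  have "(\<gamma> has_vector_derivative (v - x)) (at 0 within {0..1})"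
    unfolding \<gamma>_def by (auto intro!: derivative_eq_intros)
  moreover have "(r has_derivative D) (at (\<gamma> 0) within \<gamma> ` {0..1})"
    using D unfolding \<gamma>_def by (auto intro: has_derivative_at_withinI)
  ultimately have chain: "((r \<circ> \<gamma>) has_vector_derivative D (v - x)) (at 0 within {0..1})"
    by (rule vector_derivative_diff_chain_within)
  have on_segment: "(r \<circ> \<gamma>) s = r x + s * (w \<bullet> (v - x))" if "s \<in> {0..1}" for s
  proof -
    have "\<gamma> s = (1 - s) *\<^sub>R x + s *\<^sub>R v" unfolding \<gamma>_def by (simp add: algebra_simps)
    also have "\<dots> \<in> K" using that K by (intro convexD) auto
    finally have "r (\<gamma> s) = w \<bullet> \<gamma> s + d" using aff by auto
    moreover have "r x = w \<bullet> x + d" using aff K by auto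
    ultimately show ?thesis unfolding \<gamma>_def by (simp add: inner_add_right inner_diff_right)
  qed
  have "((\<lambda>s. r x + s * (w \<bullet> (v - x))) has_vector_derivative D (v - x)) (at 0 within {0..1})"
    by (rule has_vector_derivative_transform_within[OF chain, of 1]) (use on_segment in auto)
  moreover have "((\<lambda>s. r x + s * (w \<bullet> (v - x))) has_vector_derivative (w \<bullet> (v - x))) (at 0 within {0..1})"
    by (auto intro!: derivative_eq_intros simp: has_real_derivative_iff_has_vector_derivative[symmetric])
  ultimately show ?thesis
    using vector_derivative_unique_within_closed_interval[of 0 1 0] by (simp add: cbox_interval)
qed

lemma derivative_of_affine_on_triangle:
  fixes r :: "pt \<Rightarrow> real"
  assumes nc: "\<not> collinear {a, b, c}" and x: "x \<in> convex hull {a, b, c}"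
    and aff: "\<forall>y\<in>convex hull {a, b, c}. r y = w \<bullet> y + d"
    and D: "(r has_derivative D) (at x)"
  shows "D = (\<lambda>h. w \<bullet> h)"
proof
  fix h
  have lin: "linear D" using D by (rule has_derivative_linear)
  have "a \<in> convex hull {a,b,c}" "b \<in> convex hull {a,b,c}" "c \<in> convex hull {a,b,c}"
    by (auto intro: hull_inc)
  then have da: "D (a - x) = w \<bullet> (a - x)" and db: "D (b - x) = w \<bullet> (b - x)"
    and dc: "D (c - x) = w \<bullet> (c - x)"
    using derivative_of_affine_on_convex[OF convex_convex_hull x _ aff D] by auto
  have dba: "D (b - a) = w \<bullet> (b - a)" and dca: "D (c - a) = w \<bullet> (c - a)"
    using linear_diff[OF lin, of "b - x" "a - x"] linear_diff[OF lin, of "c - x" "a - x"] da db dc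
    by (simp_all add: inner_diff_right)
  \<comment> \<open>the edge vectors b - a and c - a span the plane\<close>
  have cr: "cross2 (b - a) (c - a) \<noteq> 0" by (rule cross2_not_collinear[OF nc])
  define \<xi> \<eta> where "\<xi> = cross2 h (c - a) / cross2 (b - a) (c - a)"
    and "\<eta> = cross2 (b - a) h / cross2 (b - a) (c - a)"
  have hh: "h = \<xi> *\<^sub>R (b - a) + \<eta> *\<^sub>R (c - a)"
    unfolding \<xi>_def \<eta>_def by (rule cross2_decomposition[OF cr])
  have "D h = \<xi> * D (b - a) + \<eta> * D (c - a)"
    by (subst hh) (simp add: linear_add[OF lin] linear_scale[OF lin])
  also have "\<dots> = w \<bullet> h"
    by (subst hh) (simp add: inner_add_right dba dca)
  finally show "D h = w \<bullet> h" .
qed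

definition affine_grad :: "(pt \<Rightarrow> real) \<Rightarrow> pt \<times> pt \<times> pt \<Rightarrow> pt" where
  "affine_grad r t = (SOME w. \<exists>d. \<forall>x\<in>tri t. r x = w \<bullet> x + d)"

definition triangles_at :: "(pt \<times> pt \<times> pt) set \<Rightarrow> pt \<Rightarrow> (pt \<times> pt \<times> pt) set" where
  "triangles_at Tr x = {t\<in>Tr. x \<in> tri t}"

lemma affine_grad_P1: "P1_on t r \<Longrightarrow> \<exists>d. \<forall>x\<in>tri t. r x = affine_grad r t \<bullet> x + d"
  unfolding P1_on_def affine_grad_def by (rule someI_ex)

lemma closed_tri: "closed (tri t)"
  by (cases t) (auto simp: tri_def intro!: compact_imp_closed finite_imp_compact_convex_hull)

lemma triangles_at_nonempty:
  assumes "fe_triangulation \<Omega> Tr" "x \<in> closure \<Omega>"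
  shows "triangles_at Tr x \<noteq> {}"
proof -
  have "x \<in> (\<Union>t\<in>Tr. tri t)" using assms by (simp add: fe_triangulation_def)
  then show ?thesis unfolding triangles_at_def by blast
qed

lemma has_derivative_P1_eq_affine_grad:
  assumes tr: "fe_triangulation \<Omega> Tr" and P1: "\<forall>t\<in>Tr. P1_on t r"
    and D: "(r has_derivative D) (at x)" and t: "t \<in> triangles_at Tr x"
  shows "D = (\<lambda>h. affine_grad r t \<bullet> h)"
proof -
  obtain a b c where abc: "t = (a, b, c)" by (cases t) auto
  have "\<not> collinear {a, b, c}"
    using tr t abc unfolding fe_triangulation_def tverts_def triangles_at_def by auto
  moreover obtain d where "\<forall>y\<in>tri t. r y = affine_grad r t \<bullet> y + d"
    using affine_grad_P1 P1 t unfolding triangles_at_def by blast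
  ultimately show ?thesis
    using derivative_of_affine_on_triangle[OF _ _ _ D] t abc
    unfolding triangles_at_def tri_def by auto
qed

lemma P1_has_derivative:
  assumes \<Omega>: "open \<Omega>" and tr: "fe_triangulation \<Omega> Tr" and P1: "\<forall>t\<in>Tr. P1_on t r"
    and x: "x \<in> \<Omega>" and w: "\<forall>t\<in>triangles_at Tr x. affine_grad r t = w"
  shows "(r has_derivative (\<lambda>h. w \<bullet> h)) (at x)"
proof -
  \<comment> \<open>near x, only the triangles containing x are met, and on each of them r is affine with gradient w\<close>
  define V where "V = \<Omega> - (\<Union>t\<in>Tr - triangles_at Tr x. tri t)"
  have "finite Tr" using tr unfolding fe_triangulation_def by auto
  then have V: "open V" unfolding V_def by (intro open_Diff \<Omega> closed_UN) (auto intro: closed_tri)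
  have xV: "x \<in> V" using x unfolding V_def triangles_at_def by auto
  have affine_near_x: "r x + w \<bullet> (y - x) = r y" if y: "y \<in> V" for y
  proof -
    have "y \<in> closure \<Omega>" using y closure_subset unfolding V_def by auto
    then obtain t where t: "t \<in> triangles_at Tr y"
      using triangles_at_nonempty[OF tr] by blast
    then have t: "t \<in> Tr" "y \<in> tri t" and tx: "t \<in> triangles_at Tr x"
      using y unfolding V_def triangles_at_def by auto
    obtain d where aff: "\<forall>z\<in>tri t. r z = affine_grad r t \<bullet> z + d" using affine_grad_P1 P1 t by blast
    have "x \<in> tri t" using tx unfolding triangles_at_def by simp
    then have "r x = w \<bullet> x + d" "r y = w \<bullet> y + d"
      using aff t w tx by auto
    then show ?thesis by (simp add: inner_diff_right)
  qed
  have "((\<lambda>y. r x + w \<bullet> (y - x)) has_derivative (\<lambda>h. w \<bullet> h)) (at x)"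
    by (auto intro!: derivative_eq_intros)
  then show ?thesis by (rule has_derivative_transform_within_open[OF _ V xV affine_near_x])
qed

lemma pgrad_P1:
  assumes \<Omega>: "open \<Omega>" and tr: "fe_triangulation \<Omega> Tr" and P1: "\<forall>t\<in>Tr. P1_on t r"
    and x: "x \<in> \<Omega>" and t: "t \<in> triangles_at Tr x"
  shows "pgrad r x = (if \<forall>t'\<in>triangles_at Tr x. affine_grad r t' = affine_grad r t
                      then affine_grad r t else 0)"
proof (cases "\<forall>t'\<in>triangles_at Tr x. affine_grad r t' = affine_grad r t")
  case True
  have D: "(r has_derivative (\<lambda>h. affine_grad r t \<bullet> h)) (at x)"
    by (rule P1_has_derivative[OF \<Omega> tr P1 x True])
  moreover have "r differentiable (at x)" using D by (auto simp: differentiable_def)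
  ultimately have "pd i r x = affine_grad r t $ i" for i
    by (simp add: pd_def inner_axis flip: frechet_derivative_at[OF D])
  then show ?thesis using True by (simp add: pgrad_def vec_eq_iff)
next
  case False
  have "\<not> r differentiable (at x)"
  proof
    assume "r differentiable (at x)"
    then obtain D where D: "(r has_derivative D) (at x)" unfolding differentiable_def by blast
    have "affine_grad r t' = affine_grad r t" if "t' \<in> triangles_at Tr x" for t'
    proof -
      have "(\<lambda>h. affine_grad r t' \<bullet> h) = (\<lambda>h. affine_grad r t \<bullet> h)"
        using has_derivative_P1_eq_affine_grad[OF tr P1 D] that t by metis
      then show ?thesis by (metis vector_eq_rdot)
    qed
    then show False using False by blast
  qed
  then have "pgrad r x = 0" by (simp add: pgrad_def pd_def vec_eq_iff)
  then show ?thesis by (simp only: if_not_P[OF False])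
qed

lemma triangles_at_measurable:
  assumes "finite Tr"
  shows "triangles_at Tr \<in> measurable lborel (count_space (Pow Tr))"
proof -
  have "{x\<in>space lborel. \<forall>t\<in>Tr. (x \<in> tri t) = (t \<in> S)} \<in> sets lborel" for S
  proof (rule sets.sets_Collect_finite_All[OF _ assms])
    fix t
    have "{x\<in>space lborel. (x \<in> tri t) = (t \<in> S)} = (if t \<in> S then tri t else - tri t)"
      by auto
    moreover have "tri t \<in> sets lborel" using closed_tri by (simp add: borel_closed)
    ultimately show "{x\<in>space lborel. (x \<in> tri t) = (t \<in> S)} \<in> sets lborel" by auto
  qed
  moreover have "triangles_at Tr -` {S} \<inter> space lborel = {x\<in>space lborel. \<forall>t\<in>Tr. (x \<in> tri t) = (t \<in> S)}"
    if "S \<in> Pow Tr" for S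
    using that unfolding triangles_at_def by auto
  ultimately show ?thesis
    by (subst measurable_count_space_eq2) (auto simp: triangles_at_def assms)
qed

lemma bounded_measurable_on_pgrad_P1:
  assumes \<Omega>: "open \<Omega>" and tr: "fe_triangulation \<Omega> Tr" and P1: "\<forall>t\<in>Tr. P1_on t r"
  shows "bounded_measurable_on \<Omega> (pgrad r)"
proof -
  \<comment> \<open>on \<Omega>, the gradient only depends on the set of triangles containing the point\<close>
  define G where "G S = pgrad r (SOME y. y \<in> \<Omega> \<and> triangles_at Tr y = S)" for S
  have fin: "finite Tr" using tr unfolding fe_triangulation_def by auto
  have G: "pgrad r x = G (triangles_at Tr x)" if x: "x \<in> \<Omega>" for x
  proof -
    define y where "y = (SOME y. y \<in> \<Omega> \<and> triangles_at Tr y = triangles_at Tr x)"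
    have y: "y \<in> \<Omega>" "triangles_at Tr y = triangles_at Tr x"
      unfolding y_def using someI[of "\<lambda>y. y \<in> \<Omega> \<and> triangles_at Tr y = triangles_at Tr x" x] x by auto
    obtain t where t: "t \<in> triangles_at Tr x"
      using triangles_at_nonempty[OF tr] x closure_subset by blast
    show ?thesis
      using pgrad_P1[OF \<Omega> tr P1 x t] pgrad_P1[OF \<Omega> tr P1 y(1)] t y(2)
      unfolding G_def y_def[symmetric] by simp
  qed
  have "(\<lambda>x. G (triangles_at Tr x)) \<in> borel_measurable lborel"
    using triangles_at_measurable[OF fin] by (rule measurable_compose) simp
  then have "(\<lambda>x. G (triangles_at Tr x)) \<in> borel_measurable (restrict_space lborel \<Omega>)"
    by (rule measurable_restrict_space1)
  then have "pgrad r \<in> borel_measurable (restrict_space lborel \<Omega>)"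
    by (rule measurable_cong[THEN iffD1, rotated]) (simp add: G space_restrict_space)
  moreover have "pgrad r ` \<Omega> \<subseteq> G ` Pow Tr"
    using G unfolding triangles_at_def by auto
  then have "bounded (pgrad r ` \<Omega>)"
    using fin by (intro bounded_subset[OF finite_imp_bounded]) auto
  ultimately show ?thesis unfolding bounded_measurable_on_def ..
qed

lemma bary_convex_combination:
  fixes a b c :: pt
  assumes cr: "cross2 (b - a) (c - a) \<noteq> 0" and x: "x = u *\<^sub>R a + v *\<^sub>R b + z *\<^sub>R c"
    and s: "u + v + z = 1"
  shows "bary a b c x = u" "bary b c a x = v" "bary c a b x = z"
proof -
  have z: "z = 1 - u - v" using s by simp
  have x1: "x $ 1 = u * a $ 1 + v * b $ 1 + z * c $ 1" and x2: "x $ 2 = u * a $ 2 + v * b $ 2 + z * c $ 2"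
    using x by simp_all
  have "cross2 (b - x) (c - x) = u * cross2 (b - a) (c - a)"
    "cross2 (c - x) (a - x) = v * cross2 (b - a) (c - a)"
    "cross2 (a - x) (b - x) = z * cross2 (b - a) (c - a)"
    "cross2 (c - b) (a - b) = cross2 (b - a) (c - a)"
    "cross2 (a - c) (b - c) = cross2 (b - a) (c - a)"
    by (simp_all add: cross2_def x1 x2 z algebra_simps)
  then show "bary a b c x = u" "bary b c a x = v" "bary c a b x = z"
    unfolding bary_def using cr by simp_all
qed

lemma p1_interp_bounded:
  assumes tr: "fe_triangulation \<Omega> Tr" and B: "\<forall>y\<in>closure \<Omega>. \<bar>w y\<bar> \<le> B"
    and x: "x \<in> closure \<Omega>"
  shows "\<bar>p1_interp Tr w x\<bar> \<le> B"
proof -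
  have ex: "\<exists>t\<in>Tr. x \<in> tri t" using triangles_at_nonempty[OF tr x] by (auto simp: triangles_at_def)
  define t where "t = (SOME t. t \<in> Tr \<and> x \<in> tri t)"
  have t: "t \<in> Tr" "x \<in> tri t" unfolding t_def using someI_ex[of "\<lambda>t. t \<in> Tr \<and> x \<in> tri t"] ex by auto
  obtain a b c where abc: "t = (a, b, c)" by (cases t) auto
  have "\<not> collinear {a, b, c}" using tr t abc unfolding fe_triangulation_def tverts_def by auto
  then have cr: "cross2 (b - a) (c - a) \<noteq> 0" by (rule cross2_not_collinear)
  have "tri t \<subseteq> closure \<Omega>" using tr t unfolding fe_triangulation_def by auto
  moreover have "a \<in> tri t" "b \<in> tri t" "c \<in> tri t" unfolding abc tri_def by (auto intro: hull_inc)
  ultimately have Babc: "\<bar>w a\<bar> \<le> B" "\<bar>w b\<bar> \<le> B" "\<bar>w c\<bar> \<le> B" using B by auto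
  obtain u v z where uvz: "0 \<le> u" "0 \<le> v" "0 \<le> z" "u + v + z = 1" "x = u *\<^sub>R a + v *\<^sub>R b + z *\<^sub>R c"
    using t unfolding abc tri_def convex_hull_3 by auto
  have "(SOME t. t \<in> Tr \<and> x \<in> tri t) = (a, b, c)" using abc t_def by simp
  then have "p1_interp Tr w x = w a * u + w b * v + w c * z"
    using ex bary_convex_combination[OF cr uvz(5,4)] by (simp add: p1_interp_def)
  also have "\<bar>\<dots>\<bar> \<le> B * u + B * v + B * z"
    using Babc uvz abs_triangle_ineq[of "w a * u" "w b * v"] abs_triangle_ineq[of "w a * u + w b * v" "w c * z"]
      mult_right_mono[OF Babc(1) uvz(1)] mult_right_mono[OF Babc(2) uvz(2)] mult_right_mono[OF Babc(3) uvz(3)]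
    by (simp add: abs_mult)
  also have "\<dots> = B" using uvz(4) by (simp flip: distrib_left)
  finally show ?thesis .
qed

lemma nrm2_Pih_le:
  assumes tr: "fe_triangulation \<Omega> Tr" and \<Omega>: "\<Omega> \<in> fmeasurable lborel" "0 < measure lborel \<Omega>"
    and B: "\<forall>y\<in>closure \<Omega>. \<bar>w y\<bar> \<le> B"
  shows "nrm2 \<Omega> (Pih \<Omega> Tr w) \<le> (2 * B)\<^sup>2 * measure lborel \<Omega>"
proof -
  have interp: "\<bar>p1_interp Tr w y\<bar> \<le> B" if "y \<in> \<Omega>" for y
    using p1_interp_bounded[OF tr B] that closure_subset by blast
  obtain y where "y \<in> \<Omega>" using \<Omega>(2) by fastforce
  then have "0 \<le> B" using interp abs_ge_zero order_trans by blast
  have "(LINT y:\<Omega>|lborel. p1_interp Tr w y) \<le> B * measure lborel \<Omega>"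
    "(LINT y:\<Omega>|lborel. - p1_interp Tr w y) \<le> B * measure lborel \<Omega>"
    using interp by (intro set_integral_le_const[OF \<Omega>(1) \<open>0 \<le> B\<close>]; force)+
  moreover have "(LINT y:\<Omega>|lborel. - p1_interp Tr w y) = - (LINT y:\<Omega>|lborel. p1_interp Tr w y)"
    by (simp add: set_lebesgue_integral_def)
  ultimately have "\<bar>(LINT y:\<Omega>|lborel. p1_interp Tr w y) / measure lborel \<Omega>\<bar> \<le> B"
    using \<Omega>(2) by (simp add: abs_le_iff field_simps)
  then have Pih_bound: "\<bar>Pih \<Omega> Tr w x\<bar> \<le> 2 * B" if "x \<in> \<Omega>" for x
    using interp[OF that] unfolding Pih_def by linarith
  have "Pih \<Omega> Tr w x * Pih \<Omega> Tr w x \<le> (2 * B)\<^sup>2" if "x \<in> \<Omega>" for x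
    using mult_mono[OF Pih_bound[OF that] Pih_bound[OF that]] \<open>0 \<le> B\<close>
    by (simp add: power2_eq_square flip: abs_mult)
  then show ?thesis
    unfolding nrm2_def ip_def by (intro set_integral_le_const[OF \<Omega>(1)]) auto
qed

lemma nrm2v_Ih_le:
  assumes tr: "fe_triangulation \<Omega> Tr" and \<Omega>: "\<Omega> \<in> fmeasurable lborel"
    and B: "\<forall>y\<in>closure \<Omega>. norm (w y) \<le> B"
  shows "nrm2v \<Omega> (Ih Tr w) \<le> 2 * B\<^sup>2 * measure lborel \<Omega>"
proof -
  have "\<bar>Ih Tr w x $ i\<bar> \<le> B" if "x \<in> \<Omega>" for x i
    using p1_interp_bounded[OF tr _ closure_subset[THEN subsetD, OF that], of "vcomp w i" B] B
    by (auto simp: Ih_def vcomp_def intro: order_trans[OF component_le_norm_cart])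
  then have sq: "(Ih Tr w x $ i)\<^sup>2 \<le> B\<^sup>2" if "x \<in> \<Omega>" for x i
    using that by (metis abs_ge_zero power2_abs power_mono)
  have "Ih Tr w x \<bullet> Ih Tr w x \<le> 2 * B\<^sup>2" if "x \<in> \<Omega>" for x
    using sq[OF that, of 1] sq[OF that, of 2] by (simp add: inner_vec_def sum_2 power2_eq_square)
  then show ?thesis
    unfolding nrm2v_def ipv_def by (intro set_integral_le_const[OF \<Omega>]) auto
qed

section \<open>Discrete Gronwall inequalities\<close>

lemma discrete_gronwall_power:
  fixes E :: "nat \<Rightarrow> real"
  assumes "\<tau> > 0" "K \<ge> 0" "L \<ge> 0"
    and step: "\<And>n. 1 \<le> n \<Longrightarrow> n < N \<Longrightarrow> E (n + 1) \<le> (1 + \<tau> * K) * E n + \<tau> * L"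
    and n: "1 \<le> n" "n \<le> N"
  shows "E n \<le> (1 + \<tau> * K) ^ (n - 1) * (E 1 + \<tau> * (n - 1) * L)"
  using n
proof (induction n rule: nat_induct_at_least)
  case base
  then show ?case by simp
next
  case (Suc n)
  have q: "1 \<le> 1 + \<tau> * K" using assms by simp
  have "(1 + \<tau> * K) * E n \<le> (1 + \<tau> * K) * ((1 + \<tau> * K) ^ (n - 1) * (E 1 + \<tau> * (n - 1) * L))"
    using Suc q by (intro mult_left_mono) auto
  also have "\<dots> = (1 + \<tau> * K) ^ n * (E 1 + \<tau> * (n - 1) * L)"
    using Suc(1) by (cases n) (auto simp: mult.assoc)
  finally have "E (Suc n) \<le> (1 + \<tau> * K) ^ n * (E 1 + \<tau> * (n - 1) * L) + \<tau> * L"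
    using step[of n] Suc by simp
  also have "\<dots> \<le> (1 + \<tau> * K) ^ n * (E 1 + \<tau> * (n - 1) * L) + (1 + \<tau> * K) ^ n * (\<tau> * L)"
    using assms mult_right_mono[OF one_le_power[OF q, of n], of "\<tau> * L"] by simp
  also have "\<dots> = (1 + \<tau> * K) ^ (Suc n - 1) * (E 1 + \<tau> * (Suc n - 1) * L)"
    using Suc(1) by (simp add: algebra_simps of_nat_diff)
  finally show ?case .
qed

lemma discrete_gronwall:
  fixes E :: "nat \<Rightarrow> real"
  assumes "\<tau> > 0" "K \<ge> 0" "L \<ge> 0" "E 1 \<ge> 0"
    and step: "\<And>n. 1 \<le> n \<Longrightarrow> n < N \<Longrightarrow> E (n + 1) \<le> (1 + \<tau> * K) * E n + \<tau> * L"
    and n: "1 \<le> n" "n \<le> N"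
  shows "E n \<le> exp (K * (\<tau> * N)) * (E 1 + \<tau> * N * L)"
proof -
  have "(1 + \<tau> * K) ^ (n - 1) \<le> exp (\<tau> * K) ^ (n - 1)"
    by (rule power_mono) (use assms in \<open>auto simp: exp_ge_add_one_self\<close>)
  also have "\<dots> = exp (K * (\<tau> * (n - 1)))" by (simp add: exp_of_nat_mult[symmetric] mult_ac)
  also have "\<dots> \<le> exp (K * (\<tau> * N))"
    using assms n by (auto intro!: mult_left_mono)
  finally have "(1 + \<tau> * K) ^ (n - 1) * (E 1 + \<tau> * (n - 1) * L) \<le> exp (K * (\<tau> * N)) * (E 1 + \<tau> * N * L)"
    using assms n by (intro mult_mono) (auto intro!: mult_right_mono)
  then show ?thesis
    using discrete_gronwall_power[where E = E, OF assms(1-3) step n] by linarith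
qed

lemma telescoping_bound:
  fixes E D :: "nat \<Rightarrow> real"
  assumes step: "\<And>n. 1 \<le> n \<Longrightarrow> n < N \<Longrightarrow> E (n + 1) + D (n + 1) \<le> E n + B"
    and m: "m < N"
  shows "E (m + 1) + (\<Sum>n = 1..m. D (n + 1)) \<le> E 1 + m * B"
  using m
proof (induction m)
  case (Suc m)
  then show ?case using step[of "Suc m"] by (simp add: algebra_simps)
qed simp

lemma gronwall_energy_estimate:
  fixes E D :: "nat \<Rightarrow> real"
  assumes \<tau>: "\<tau> > 0" "\<tau> * N = T" and KL: "K \<ge> 0" "L \<ge> 0"
    and nonneg: "\<And>n. 0 \<le> E n" "\<And>n. 0 \<le> D n"
    and step: "\<And>n. 1 \<le> n \<Longrightarrow> n < N \<Longrightarrow> E (n + 1) + D (n + 1) \<le> (1 + \<tau> * K) * E n + \<tau> * L"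
  shows gronwall_energy_max: "\<And>n. 1 \<le> n \<Longrightarrow> n \<le> N \<Longrightarrow> E n \<le> exp (K * T) * (E 1 + T * L)"
    and gronwall_energy_sum: "\<And>m. m < N \<Longrightarrow>
      E (m + 1) + (\<Sum>n = 1..m. D (n + 1)) \<le> E 1 + T * (K * (exp (K * T) * (E 1 + T * L)) + L)"
proof -
  define Emax where "Emax = exp (K * T) * (E 1 + T * L)"
  show max: "E n \<le> Emax" if "1 \<le> n" "n \<le> N" for n
  proof -
    have "E n \<le> exp (K * (\<tau> * N)) * (E 1 + \<tau> * N * L)"
    proof (rule discrete_gronwall[OF \<tau>(1) KL nonneg(1) _ that])
      show "E (n + 1) \<le> (1 + \<tau> * K) * E n + \<tau> * L" if "1 \<le> n" "n < N" for n
        using step[OF that] nonneg(2)[of "n + 1"] by linarith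
    qed
    then show ?thesis unfolding Emax_def using \<tau>(2) by simp
  qed
  fix m assume m: "m < N"
  have "E (m + 1) + (\<Sum>n = 1..m. D (n + 1)) \<le> E 1 + m * (\<tau> * (K * Emax + L))"
  proof (rule telescoping_bound[OF _ m])
    fix n assume n: "1 \<le> n" "n < N"
    have "\<tau> * K * E n \<le> \<tau> * K * Emax" using max[of n] n \<tau> KL by (intro mult_left_mono) auto
    then show "E (n + 1) + D (n + 1) \<le> E n + \<tau> * (K * Emax + L)"
      using step[OF n] by (simp add: algebra_simps)
  qed
  also have "m * (\<tau> * (K * Emax + L)) \<le> T * (K * Emax + L)"
  proof -
    have "0 \<le> T" using \<tau> by (simp flip: \<tau>(2))
    then have "0 \<le> Emax" unfolding Emax_def using nonneg(1)[of 1] KL by simp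
    moreover have "m * \<tau> \<le> T" using m \<tau> by (simp flip: \<tau>(2))
    ultimately show ?thesis using KL by (simp add: mult.assoc[symmetric] mult_right_mono)
  qed
  finally show "E (m + 1) + (\<Sum>n = 1..m. D (n + 1)) \<le> E 1 + T * (K * (exp (K * T) * (E 1 + T * L)) + L)"
    unfolding Emax_def by simp
qed

lemma clear_denominator_ineq:
  fixes a b r d :: real
  assumes "d > 0" "a / d + b \<le> r"
  shows "a + d * b \<le> d * r"
proof -
  have "d * (a / d + b) \<le> d * r" using assms by (intro mult_left_mono) auto
  then show ?thesis using assms(1) by (simp add: distrib_left)
qed

lemma absorb_implicit_term:
  fixes a a' d q r s \<tau> :: real
  assumes s: "0 \<le> s" "s \<le> 1 / 2" "2 * s \<le> \<tau>" and nonneg: "0 \<le> a" "0 \<le> d" "0 \<le> r" "0 \<le> q"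
    and q: "q \<le> a'" and ineq: "a' + d \<le> a + \<tau> * r + s * q"
  shows "a' + d \<le> (1 + \<tau>) * a + \<tau> * (2 * r)"
proof -
  have "(1 - s) * (a' + d) \<le> a + \<tau> * r"
    using ineq mult_left_mono[OF q s(1)] mult_nonneg_nonneg[OF s(1) nonneg(2)] by (simp add: algebra_simps)
  then have "(1 + 2 * s) * ((1 - s) * (a' + d)) \<le> (1 + 2 * s) * (a + \<tau> * r)"
    using s by (intro mult_left_mono) auto
  moreover have "a' + d \<le> (1 + 2 * s) * ((1 - s) * (a' + d))"
  proof -
    have "(1 + 2 * s) * (1 - s) = 1 + s * (1 - 2 * s)" by (simp add: algebra_simps)
    moreover have "0 \<le> s * (1 - 2 * s) * (a' + d)" using s nonneg q by simp
    ultimately show ?thesis by (simp add: algebra_simps)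
  qed
  moreover have "(1 + 2 * s) * (a + \<tau> * r) \<le> (1 + \<tau>) * a + \<tau> * (2 * r)"
  proof -
    have "0 \<le> \<tau>" using s by linarith
    then have "2 * s * a \<le> \<tau> * a" "2 * s * (\<tau> * r) \<le> 1 * (\<tau> * r)"
      using s nonneg by (intro mult_right_mono; simp)+
    then show ?thesis by (simp add: algebra_simps)
  qed
  ultimately show ?thesis by linarith
qed

lemma implicit_energy_step:
  fixes A A' Z G B q \<tau> \<kappa> :: real
  assumes "\<tau> > 0" "\<kappa> > 0" and nonneg: "0 \<le> A" "0 \<le> Z" "0 \<le> G" "0 \<le> B" "0 \<le> q" and q: "q \<le> A'"
    and ineq: "(A' - A + Z) / (\<kappa> * \<tau>) + G
      \<le> B / (2 * (1 / (2 * \<kappa> * (1 + \<tau>)))) + 1 / (2 * \<kappa> * (1 + \<tau>)) * q"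
  shows "A' + \<kappa> * \<tau> * G \<le> (1 + \<tau>) * A + \<tau> * (2 * \<kappa>\<^sup>2 * (1 + \<tau>) * B)"
proof -
  define s where "s = \<tau> / (2 * (1 + \<tau>))"
  have s: "0 \<le> s" "s \<le> 1 / 2" "2 * s \<le> \<tau>" unfolding s_def using assms(1) by (simp_all add: field_simps)
  have "A' - A + Z + \<kappa> * \<tau> * G
      \<le> \<kappa> * \<tau> * (B / (2 * (1 / (2 * \<kappa> * (1 + \<tau>)))) + 1 / (2 * \<kappa> * (1 + \<tau>)) * q)"
    using clear_denominator_ineq[OF _ ineq] assms(1,2) by (simp add: mult.assoc)
  also have "\<dots> = A + \<tau> * (\<kappa>\<^sup>2 * (1 + \<tau>) * B) + s * q - A"
  proof -
    have "2 * \<kappa> * (1 + \<tau>) \<noteq> 0" using assms(1,2) by simp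
    then show ?thesis unfolding s_def using assms(1,2) by (simp add: field_simps power2_eq_square)
  qed
  finally have "A' + (Z + \<kappa> * \<tau> * G) \<le> A + \<tau> * (\<kappa>\<^sup>2 * (1 + \<tau>) * B) + s * q"
    by simp
  then have "A' + (Z + \<kappa> * \<tau> * G) \<le> (1 + \<tau>) * A + \<tau> * (2 * (\<kappa>\<^sup>2 * (1 + \<tau>) * B))"
    using assms nonneg q by (intro absorb_implicit_term[OF s]) auto
  then show ?thesis using nonneg(2) by (simp add: mult.assoc)
qed

lemma extrapolated_energy_le:
  fixes x y z h :: real
  assumes "x \<le> z" "h \<le> 8 * x + 2 * y"
  shows "x + h \<le> 9 * z + 2 * y"
  using assms by linarith

lemma constant_le_time_sum:
  fixes a :: "nat \<Rightarrow> real"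
  assumes "T > 0" "A > 0" "N \<ge> 1" "\<And>n. 0 \<le> a n"
  shows "K \<le> (\<bar>K\<bar> / (T * A) + 1) * (T / real N) * (\<Sum>n = 0..N - 1. a n + A)"
proof -
  have "(\<bar>K\<bar> / (T * A) + 1) * T * A = \<bar>K\<bar> + T * A"
    using assms by (simp add: field_simps)
  moreover have "0 < T * A" using assms by simp
  ultimately have "K \<le> (\<bar>K\<bar> / (T * A) + 1) * T * A" by linarith
  also have "\<dots> = (\<bar>K\<bar> / (T * A) + 1) * (T / real N) * (\<Sum>n = 0..N - 1. A)"
    using assms(3) by simp
  also have "\<dots> \<le> (\<bar>K\<bar> / (T * A) + 1) * (T / real N) * (\<Sum>n = 0..N - 1. a n + A)"
    using assms by (intro mult_left_mono sum_mono) auto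
  finally show ?thesis .
qed

section \<open>Energy inequalities for one time step\<close>

locale bdf2_data =
  fixes \<Omega> :: "pt set" and \<nu> :: "real \<Rightarrow> real" and \<theta> U g \<gamma> \<alpha> k T M :: real
    and f :: "real \<Rightarrow> pt \<Rightarrow> pt" and u0 :: "pt \<Rightarrow> pt" and c0 :: "pt \<Rightarrow> real"
  assumes open_domain: "open \<Omega>" and bounded_domain: "bounded \<Omega>" and nonempty_domain: "\<Omega> \<noteq> {}"
    and \<theta>_pos: "\<theta> > 0" and U_pos: "U > 0" and k_pos: "k > 0" and T_pos: "T > 0"
    and \<nu>_continuous: "continuous_on UNIV \<nu>" and \<nu>_bounds: "\<And>s. 1 / k \<le> \<nu> s \<and> \<nu> s \<le> k"
    and forcing: "\<And>t. t \<in> {0..T} \<Longrightarrow> (\<forall>i. L2 \<Omega> (vcomp (f t) i)) \<and> nrm2v \<Omega> (f t) \<le> M"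
    and u0_continuous: "continuous_on (closure \<Omega>) u0"
    and c0_continuous: "continuous_on (closure \<Omega>) c0"
begin

lemma domain_fmeasurable: "\<Omega> \<in> fmeasurable lborel"
  using emeasure_bounded_finite[OF bounded_domain] open_domain unfolding fmeasurable_def by simp

lemma measure_domain_pos: "0 < measure lborel \<Omega>"
proof -
  obtain x e where "e > 0" "ball x e \<subseteq> \<Omega>"
    using open_domain nonempty_domain open_contains_ball by blast
  then have "measure lborel (ball x e) \<le> measure lborel \<Omega>"
    using domain_fmeasurable by (intro measure_mono_fmeasurable) auto
  then show ?thesis using content_ball_pos[OF \<open>e > 0\<close>, of x] by linarith
qed

lemma M_nonneg: "0 \<le> M"
proof -
  have "T \<in> {0..T}" using T_pos by simp
  then show ?thesis using forcing nrm2v_nonneg[of \<Omega> "f T"] by fastforce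
qed

lemma forcing_square_integrable:
  assumes "t \<in> {0..T}"
  shows "set_integrable lborel \<Omega> (\<lambda>x. f t x \<bullet> f t x)"
proof -
  have "set_integrable lborel \<Omega> (\<lambda>x. (f t x $ i)\<^sup>2)" for i
    using forcing[OF assms] unfolding L2_def vcomp_def by blast
  then have "set_integrable lborel \<Omega> (\<lambda>x. (f t x $ 1)\<^sup>2 + (f t x $ 2)\<^sup>2)" by simp
  then show ?thesis by (simp add: inner_vec_def sum_2 power2_eq_square)
qed

(* If |h|^2 <= s, then g^2 |1 + gamma h|^2 + |f t|^2 <= forcing_bound s. *)
definition forcing_bound :: "real \<Rightarrow> real" where
  "forcing_bound s = g\<^sup>2 * (2 * measure lborel \<Omega> + 2 * \<gamma>\<^sup>2 * s) + M"

lemma forcing_bound_nonneg: "0 \<le> s \<Longrightarrow> 0 \<le> forcing_bound s"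
  unfolding forcing_bound_def using M_nonneg measure_domain_pos by simp

lemma forcing_bound_mono: "s \<le> s' \<Longrightarrow> forcing_bound s \<le> forcing_bound s'"
  unfolding forcing_bound_def by (simp add: mult_left_mono)

lemma viscous_term_lower_bound:
  assumes h: "bounded_measurable_on \<Omega> h"
  shows "1 / k * gnrm2v \<Omega> v \<le> wgrad_v \<Omega> (\<lambda>x. \<nu> (h x + \<alpha>)) v v"
proof -
  have "h \<in> borel_measurable (restrict_space lborel \<Omega>)"
    using h by (simp add: bounded_measurable_on_def)
  then have "(\<lambda>x. \<nu> (h x + \<alpha>)) \<in> borel_measurable (restrict_space lborel \<Omega>)"
    by (intro measurable_compose[OF _ borel_measurable_continuous_onI[OF \<nu>_continuous]]) simp
  moreover have "gnrm2v \<Omega> v = (LINT x:\<Omega>|lborel. \<Sum>i\<in>UNIV. pgrad (vcomp v i) x \<bullet> pgrad (vcomp v i) x)"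
    by (simp add: gnrm2v_def wgrad_v_def)
  ultimately show ?thesis
    unfolding wgrad_v_def using open_domain k_pos \<nu>_bounds
    by (simp only:) (intro weighted_set_integral_lower_bound; auto intro: sum_nonneg)
qed

lemma buoyancy_square_le:
  assumes h: "bounded_measurable_on \<Omega> h"
  shows "nrm2 \<Omega> (\<lambda>x. 1 + \<gamma> * h x) \<le> 2 * measure lborel \<Omega> + 2 * \<gamma>\<^sup>2 * nrm2 \<Omega> h"
proof -
  note \<Omega> = domain_fmeasurable
  have const: "set_integrable lborel \<Omega> (\<lambda>x. a::real)" for a
    by (rule bounded_measurable_on_set_integrable[OF \<Omega> bounded_measurable_on_const])
  have "bounded_measurable_on \<Omega> (\<lambda>x. 1 + \<gamma> * h x)"
    by (intro bounded_measurable_on_add bounded_measurable_on_mult bounded_measurable_on_const h)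
  then have "set_integrable lborel \<Omega> (\<lambda>x. (1 + \<gamma> * h x) * (1 + \<gamma> * h x))"
    using bounded_measurable_on_inner_integrable[OF \<Omega>] by fastforce
  moreover have h2: "set_integrable lborel \<Omega> (\<lambda>x. h x * h x)"
    using bounded_measurable_on_inner_integrable[OF \<Omega> h h] by simp
  moreover have "(1 + \<gamma> * h x) * (1 + \<gamma> * h x) \<le> 2 + 2 * \<gamma>\<^sup>2 * (h x * h x)" for x
    using zero_le_square[of "1 - \<gamma> * h x"] by (simp add: algebra_simps power2_eq_square)
  ultimately have "nrm2 \<Omega> (\<lambda>x. 1 + \<gamma> * h x) \<le> (LINT x:\<Omega>|lborel. 2 + 2 * \<gamma>\<^sup>2 * (h x * h x))"
    unfolding nrm2_def ip_def using const by (intro set_integral_mono) auto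
  also have "\<dots> = 2 * measure lborel \<Omega> + 2 * \<gamma>\<^sup>2 * nrm2 \<Omega> h"
    using h2 const fmeasurableD[OF \<Omega>] fmeasurableD2[OF \<Omega>] by (simp add: nrm2_def ip_def set_integral_const)
  finally show ?thesis .
qed

lemma source_term_bound:
  assumes h: "bounded_measurable_on \<Omega> h" and v: "bounded_measurable_on \<Omega> v"
    and t: "t \<in> {0..T}" and \<epsilon>: "\<epsilon> > 0"
  shows "- g * ip \<Omega> (\<lambda>x. 1 + \<gamma> * h x) (vcomp v 2) + ipv \<Omega> (f t) v
    \<le> forcing_bound (nrm2 \<Omega> h) / (2 * \<epsilon>) + \<epsilon> * nrm2v \<Omega> v"
proof -
  note \<Omega> = domain_fmeasurable
  have sq: "set_integrable lborel \<Omega> (\<lambda>x. F x \<bullet> F x)"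
    if "bounded_measurable_on \<Omega> F" for F :: "pt \<Rightarrow> 'b::euclidean_space"
    using bounded_measurable_on_inner_integrable[OF \<Omega> that that] .
  have "- g * ip \<Omega> (\<lambda>x. 1 + \<gamma> * h x) (vcomp v 2)
      \<le> g\<^sup>2 / (2 * \<epsilon>) * nrm2 \<Omega> (\<lambda>x. 1 + \<gamma> * h x) + \<epsilon> / 2 * nrm2 \<Omega> (vcomp v 2)"
    using young_set_integral[of \<epsilon> lborel \<Omega> "\<lambda>x. 1 + \<gamma> * h x" "vcomp v 2" "- g"] \<epsilon>
      sq[OF bounded_measurable_on_add[OF bounded_measurable_on_const
            bounded_measurable_on_mult[OF bounded_measurable_on_const h]]]
      sq[OF bounded_measurable_on_vec_nth[OF v, of 2]]
    by (simp add: ip_def nrm2_def vcomp_def)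
  also have "\<dots> \<le> g\<^sup>2 / (2 * \<epsilon>) * (2 * measure lborel \<Omega> + 2 * \<gamma>\<^sup>2 * nrm2 \<Omega> h) + \<epsilon> / 2 * nrm2v \<Omega> v"
    using buoyancy_square_le[OF h] component_set_integral_le[OF \<Omega> v, of 2] \<epsilon>
    by (intro add_mono mult_left_mono) (auto simp: nrm2_def ip_def nrm2v_def ipv_def vcomp_def)
  finally have buoyancy: "- g * ip \<Omega> (\<lambda>x. 1 + \<gamma> * h x) (vcomp v 2)
      \<le> g\<^sup>2 / (2 * \<epsilon>) * (2 * measure lborel \<Omega> + 2 * \<gamma>\<^sup>2 * nrm2 \<Omega> h) + \<epsilon> / 2 * nrm2v \<Omega> v" .
  have "ipv \<Omega> (f t) v \<le> 1 / (2 * \<epsilon>) * nrm2v \<Omega> (f t) + \<epsilon> / 2 * nrm2v \<Omega> v"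
    using young_set_integral[of \<epsilon> lborel \<Omega> "f t" v 1] \<epsilon> forcing_square_integrable[OF t] sq[OF v]
    by (simp add: ipv_def nrm2v_def)
  also have "\<dots> \<le> 1 / (2 * \<epsilon>) * M + \<epsilon> / 2 * nrm2v \<Omega> v"
    using forcing[OF t] \<epsilon> by (intro add_mono mult_left_mono) auto
  finally show ?thesis
    using buoyancy \<epsilon> unfolding forcing_bound_def by (simp add: field_simps)
qed

lemma velocity_energy_inequality:
  assumes v: "bounded_measurable_on \<Omega> v" and h: "bounded_measurable_on \<Omega> h"
    and t: "t \<in> {0..T}" and \<epsilon>: "\<epsilon> > 0"
    and eq: "X + wgrad_v \<Omega> (\<lambda>x. \<nu> (h x + \<alpha>)) v v + Btri \<Omega> w v v - ip \<Omega> (pdiv v) q + ip \<Omega> (pdiv v) q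
             = - g * ip \<Omega> (\<lambda>x. 1 + \<gamma> * h x) (vcomp v 2) + ipv \<Omega> (f t) v"
  shows "X + 1 / k * gnrm2v \<Omega> v \<le> forcing_bound (nrm2 \<Omega> h) / (2 * \<epsilon>) + \<epsilon> * nrm2v \<Omega> v"
proof -
  have "X + 1 / k * gnrm2v \<Omega> v \<le> X + wgrad_v \<Omega> (\<lambda>x. \<nu> (h x + \<alpha>)) v v"
    using viscous_term_lower_bound[OF h, of v] by simp
  also have "\<dots> = - g * ip \<Omega> (\<lambda>x. 1 + \<gamma> * h x) (vcomp v 2) + ipv \<Omega> (f t) v"
    using eq by (simp add: Btri_def)
  finally show ?thesis using source_term_bound[OF h v t \<epsilon>] by linarith
qed

lemma initial_data_bounds:
  obtains X Y where "\<And>Tr. fe_triangulation \<Omega> Tr \<Longrightarrow> nrm2 \<Omega> (Pih \<Omega> Tr c0) \<le> X"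
    and "\<And>Tr. fe_triangulation \<Omega> Tr \<Longrightarrow> nrm2v \<Omega> (Ih Tr u0) \<le> Y"
proof -
  have compact: "compact (closure \<Omega>)" using bounded_domain by (simp add: compact_closure)
  obtain Bc where "\<forall>y\<in>closure \<Omega>. \<bar>c0 y\<bar> \<le> Bc"
    using compact_imp_bounded[OF compact_continuous_image[OF c0_continuous compact]]
    by (auto simp: bounded_iff)
  moreover obtain Bu where "\<forall>y\<in>closure \<Omega>. norm (u0 y) \<le> Bu"
    using compact_imp_bounded[OF compact_continuous_image[OF u0_continuous compact]]
    by (auto simp: bounded_iff)
  ultimately show ?thesis
    using that nrm2_Pih_le[OF _ domain_fmeasurable measure_domain_pos] nrm2v_Ih_le[OF _ domain_fmeasurable]
    by blast
qed

end

locale bdf2_run = bdf2_data +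
  fixes Tr :: "(pt \<times> pt \<times> pt) set" and N :: nat
    and u :: "nat \<Rightarrow> pt \<Rightarrow> pt" and p :: "nat \<Rightarrow> pt \<Rightarrow> real" and c :: "nat \<Rightarrow> pt \<Rightarrow> real"
  assumes triangulation: "fe_triangulation \<Omega> Tr" and N_pos: "N \<ge> 1"
    and solution: "bdf2_solution \<Omega> \<nu> \<alpha> \<theta> U g \<gamma> f u0 c0 T Tr N u p c"
begin

definition \<tau> :: real where "\<tau> = T / real N"

lemma \<tau>_pos: "\<tau> > 0"
  using T_pos N_pos by (simp add: \<tau>_def)

lemma \<tau>_le_T: "\<tau> \<le> T"
  using T_pos N_pos by (simp add: \<tau>_def divide_le_eq)

lemma \<tau>_times_N: "\<tau> * N = T"
  using N_pos by (simp add: \<tau>_def)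

lemma time_level_in_interval: "n \<le> N \<Longrightarrow> real n * \<tau> \<in> {0..T}"
  using T_pos N_pos by (auto simp: \<tau>_def field_simps)

lemma iterates_in_spaces: "n \<le> N \<Longrightarrow> u n \<in> Vh \<Omega> Tr \<and> c n \<in> Hh \<Omega> Tr"
  and pressure_in_Mh: "n \<in> {1..N} \<Longrightarrow> p n \<in> Mh \<Omega> Tr"
  and initial_values: "u 0 = Ih Tr u0" "c 0 = Pih \<Omega> Tr c0"
  using solution unfolding bdf2_solution_def Let_def by blast+

lemma first_step_equations:
  "\<forall>v\<in>Vh \<Omega> Tr. \<forall>q\<in>Mh \<Omega> Tr.
        ipv \<Omega> (\<lambda>x. (1 / \<tau>) *\<^sub>R (u 1 x - u 0 x)) v
        + wgrad_v \<Omega> (\<lambda>x. \<nu> (c 0 x + \<alpha>)) (u 1) v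
        + Btri \<Omega> (u 0) (u 1) v
        - ip \<Omega> (pdiv v) (p 1) + ip \<Omega> (pdiv (u 1)) q
        = - g * ip \<Omega> (\<lambda>x. 1 + \<gamma> * c 0 x) (vcomp v 2) + ipv \<Omega> (f (1 * \<tau>)) v"
  "\<forall>r\<in>Hh \<Omega> Tr.
        ip \<Omega> (\<lambda>x. (c 1 x - c 0 x) / \<tau>) r + \<theta> * grad_ip \<Omega> (c 1) r
        + btri \<Omega> (u 0) (c 1) r - U * ip \<Omega> (c 0) (pd 2 r)
        = U * \<alpha> * ip \<Omega> (\<lambda>x. 1) (pd 2 r)"
  using solution unfolding bdf2_solution_def Let_def \<tau>_def by blast+

lemma bdf2_step_equations:
  assumes "1 \<le> n" "n < N"
  shows "\<forall>v\<in>Vh \<Omega> Tr. \<forall>q\<in>Mh \<Omega> Tr.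
          ipv \<Omega> (\<lambda>x. (1 / (2 * \<tau>)) *\<^sub>R (3 *\<^sub>R u (n + 1) x - 4 *\<^sub>R u n x + u (n - 1) x)) v
          + wgrad_v \<Omega> (\<lambda>x. \<nu> (hats c n x + \<alpha>)) (u (n + 1)) v
          + Btri \<Omega> (hatv u n) (u (n + 1)) v
          - ip \<Omega> (pdiv v) (p (n + 1)) + ip \<Omega> (pdiv (u (n + 1))) q
          = - g * ip \<Omega> (\<lambda>x. 1 + \<gamma> * hats c n x) (vcomp v 2)
            + ipv \<Omega> (f (real (n + 1) * \<tau>)) v"
    "\<forall>r\<in>Hh \<Omega> Tr.
          ip \<Omega> (\<lambda>x. (3 * c (n + 1) x - 4 * c n x + c (n - 1) x) / (2 * \<tau>)) r
          + \<theta> * grad_ip \<Omega> (c (n + 1)) r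
          + btri \<Omega> (hatv u n) (c (n + 1)) r - U * ip \<Omega> (hats c n) (pd 2 r)
          = U * \<alpha> * ip \<Omega> (\<lambda>x. 1) (pd 2 r)"
  using solution assms unfolding bdf2_solution_def Let_def \<tau>_def by auto

lemma bounded_measurable_velocity: "n \<le> N \<Longrightarrow> bounded_measurable_on \<Omega> (u n)"
  using iterates_in_spaces bounded_domain by (auto simp: Vh_def intro: bounded_measurable_on_continuous)

lemma bounded_measurable_concentration: "n \<le> N \<Longrightarrow> bounded_measurable_on \<Omega> (c n)"
  using iterates_in_spaces bounded_domain by (auto simp: Hh_def intro: bounded_measurable_on_continuous)

lemma bounded_measurable_hats: "n \<le> N \<Longrightarrow> bounded_measurable_on \<Omega> (hats c n)"
  unfolding hats_def
  by (intro bounded_measurable_on_diff bounded_measurable_on_mult bounded_measurable_on_const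
      bounded_measurable_concentration) auto

lemma concentration_energy_inequality:
  assumes r: "r \<in> Hh \<Omega> Tr" and h: "bounded_measurable_on \<Omega> h"
    and eq: "X + \<theta> * grad_ip \<Omega> r r + btri \<Omega> w r r - U * ip \<Omega> h (pd 2 r)
             = U * \<alpha> * ip \<Omega> (\<lambda>x. 1) (pd 2 r)"
  shows "X + \<theta> / 2 * gnrm2 \<Omega> r \<le> U\<^sup>2 / \<theta> * (nrm2 \<Omega> h + \<alpha>\<^sup>2 * measure lborel \<Omega>)"
proof -
  note \<Omega> = domain_fmeasurable
  have grad: "bounded_measurable_on \<Omega> (pgrad r)"
    using r open_domain triangulation by (intro bounded_measurable_on_pgrad_P1) (auto simp: Hh_def)
  have dr: "bounded_measurable_on \<Omega> (pd 2 r)"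
    using bounded_measurable_on_vec_nth[OF grad, of 2] by (simp add: pgrad_def)
  have sq: "set_integrable lborel \<Omega> (\<lambda>x. F x * F x)" if "bounded_measurable_on \<Omega> F" for F :: "pt \<Rightarrow> real"
    using bounded_measurable_on_inner_integrable[OF \<Omega> that that] by simp
  have "nrm2 \<Omega> (pd 2 r) \<le> gnrm2 \<Omega> r"
    using component_set_integral_le[OF \<Omega> grad, of 2]
    by (simp add: nrm2_def ip_def gnrm2_def grad_ip_def pgrad_def)
  then have "\<theta> / 2 * nrm2 \<Omega> (pd 2 r) \<le> \<theta> / 2 * gnrm2 \<Omega> r"
    using \<theta>_pos by simp
  moreover have "U * ip \<Omega> h (pd 2 r) \<le> U\<^sup>2 / \<theta> * nrm2 \<Omega> h + \<theta> / 4 * nrm2 \<Omega> (pd 2 r)"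
    using young_set_integral[of "\<theta> / 2" lborel \<Omega> h "pd 2 r" U] \<theta>_pos sq[OF h] sq[OF dr]
    by (simp add: ip_def nrm2_def)
  moreover have "U * \<alpha> * ip \<Omega> (\<lambda>x. 1) (pd 2 r)
      \<le> U\<^sup>2 / \<theta> * (\<alpha>\<^sup>2 * measure lborel \<Omega>) + \<theta> / 4 * nrm2 \<Omega> (pd 2 r)"
    using young_set_integral[of "\<theta> / 2" lborel \<Omega> "\<lambda>x. 1" "pd 2 r" "U * \<alpha>"] \<theta>_pos
      sq[OF bounded_measurable_on_const[of \<Omega> 1]] sq[OF dr] fmeasurableD[OF \<Omega>] fmeasurableD2[OF \<Omega>]
    by (simp add: ip_def nrm2_def set_integral_const power_mult_distrib)
  moreover have "X + \<theta> * gnrm2 \<Omega> r = U * ip \<Omega> h (pd 2 r) + U * \<alpha> * ip \<Omega> (\<lambda>x. 1) (pd 2 r)"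
    using eq by (simp add: btri_def gnrm2_def)
  ultimately show ?thesis by (simp add: distrib_left)
qed

lemma concentration_first_step:
  "nrm2 \<Omega> (c 1) \<le> (1 + \<tau> * (2 * U\<^sup>2 / \<theta>)) * nrm2 \<Omega> (c 0)
     + \<tau> * (2 * U\<^sup>2 / \<theta> * \<alpha>\<^sup>2 * measure lborel \<Omega>)"
proof -
  have c1: "c 1 \<in> Hh \<Omega> Tr" using iterates_in_spaces N_pos by blast
  define Z where "Z = nrm2 \<Omega> (\<lambda>x. c 1 x - c 0 x)"
  have "ip \<Omega> (\<lambda>x. (c 1 x - c 0 x) / \<tau>) (c 1) = 1 / (2 * \<tau>) * (nrm2 \<Omega> (c 1) - nrm2 \<Omega> (c 0) + Z)"
    using euler_set_integral_identity[OF domain_fmeasurable, of "c 1" "c 0" "1 / \<tau>"]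
      bounded_measurable_concentration N_pos
    by (simp add: ip_def nrm2_def Z_def mult_ac)
  moreover have "0 \<le> 1 / (2 * \<tau>) * Z" "0 \<le> \<theta> / 2 * gnrm2 \<Omega> (c 1)"
    unfolding Z_def using \<tau>_pos \<theta>_pos nrm2_nonneg gnrm2_nonneg by simp_all
  ultimately have "(nrm2 \<Omega> (c 1) - nrm2 \<Omega> (c 0)) / (2 * \<tau>)
      \<le> U\<^sup>2 / \<theta> * (nrm2 \<Omega> (c 0) + \<alpha>\<^sup>2 * measure lborel \<Omega>)"
    using concentration_energy_inequality[OF c1 bounded_measurable_concentration first_step_equations(2)[rule_format, OF c1]]
    by (simp add: distrib_left)
  then show ?thesis
    using \<tau>_pos \<theta>_pos by (simp add: pos_divide_le_eq algebra_simps)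
qed

lemma concentration_bdf2_step:
  assumes n: "1 \<le> n" "n < N"
  shows "nrm2 \<Omega> (c (n + 1)) + nrm2 \<Omega> (hats c (n + 1)) + 2 * \<tau> * \<theta> * gnrm2 \<Omega> (c (n + 1))
    \<le> (1 + \<tau> * (4 * U\<^sup>2 / \<theta>)) * (nrm2 \<Omega> (c n) + nrm2 \<Omega> (hats c n))
       + \<tau> * (4 * U\<^sup>2 / \<theta> * \<alpha>\<^sup>2 * measure lborel \<Omega>)"
proof -
  have c: "c (n + 1) \<in> Hh \<Omega> Tr" using iterates_in_spaces n by simp
  define Z where "Z = nrm2 \<Omega> (\<lambda>x. c (n + 1) x - 2 * c n x + c (n - 1) x)"
  have "ip \<Omega> (\<lambda>x. (3 * c (n + 1) x - 4 * c n x + c (n - 1) x) / (2 * \<tau>)) (c (n + 1))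
      = 1 / (4 * \<tau>) * (nrm2 \<Omega> (c (n + 1)) + nrm2 \<Omega> (hats c (n + 1))
          - nrm2 \<Omega> (c n) - nrm2 \<Omega> (hats c n) + Z)"
    using bdf2_set_integral_identity[OF domain_fmeasurable, of "c (n + 1)" "c n" "c (n - 1)" "1 / (2 * \<tau>)"]
      bounded_measurable_concentration n
    by (simp add: ip_def nrm2_def hats_def Z_def mult_ac)
  moreover have "0 \<le> 1 / (4 * \<tau>) * Z" "0 \<le> \<theta> / 2 * gnrm2 \<Omega> (c (n + 1))"
    unfolding Z_def using \<tau>_pos \<theta>_pos nrm2_nonneg gnrm2_nonneg by simp_all
  ultimately have "(nrm2 \<Omega> (c (n + 1)) + nrm2 \<Omega> (hats c (n + 1)) - nrm2 \<Omega> (c n) - nrm2 \<Omega> (hats c n)) / (4 * \<tau>)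
      + \<theta> / 2 * gnrm2 \<Omega> (c (n + 1))
      \<le> U\<^sup>2 / \<theta> * (nrm2 \<Omega> (hats c n) + \<alpha>\<^sup>2 * measure lborel \<Omega>)"
    using concentration_energy_inequality[OF c bounded_measurable_hats bdf2_step_equations(2)[OF n, rule_format, OF c]] n
    by (simp add: distrib_left)
  also have "\<dots> \<le> U\<^sup>2 / \<theta> * (nrm2 \<Omega> (c n) + nrm2 \<Omega> (hats c n) + \<alpha>\<^sup>2 * measure lborel \<Omega>)"
    using nrm2_nonneg[of \<Omega> "c n"] \<theta>_pos by (intro mult_left_mono) auto
  finally have "(nrm2 \<Omega> (c (n + 1)) + nrm2 \<Omega> (hats c (n + 1)) - nrm2 \<Omega> (c n) - nrm2 \<Omega> (hats c n)) / (4 * \<tau>)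
      + \<theta> / 2 * gnrm2 \<Omega> (c (n + 1))
      \<le> U\<^sup>2 / \<theta> * (nrm2 \<Omega> (c n) + nrm2 \<Omega> (hats c n) + \<alpha>\<^sup>2 * measure lborel \<Omega>)" .
  from clear_denominator_ineq[OF _ this, of] \<tau>_pos
  have "nrm2 \<Omega> (c (n + 1)) + nrm2 \<Omega> (hats c (n + 1)) - nrm2 \<Omega> (c n) - nrm2 \<Omega> (hats c n)
      + 4 * \<tau> * (\<theta> / 2 * gnrm2 \<Omega> (c (n + 1)))
      \<le> 4 * \<tau> * (U\<^sup>2 / \<theta> * (nrm2 \<Omega> (c n) + nrm2 \<Omega> (hats c n) + \<alpha>\<^sup>2 * measure lborel \<Omega>))"
    by simp
  then show ?thesis by (simp add: algebra_simps add_divide_distrib)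
qed

lemma velocity_first_step:
  "nrm2v \<Omega> (u 1) \<le> (1 + \<tau>) * nrm2v \<Omega> (u 0)
     + \<tau> * (8 * (1 + T) * forcing_bound (nrm2 \<Omega> (c 0)))"
proof -
  define B where "B = forcing_bound (nrm2 \<Omega> (c 0))"
  define Z where "Z = nrm2v \<Omega> (\<lambda>x. u 1 x - u 0 x)"
  have u1: "u 1 \<in> Vh \<Omega> Tr" and p1: "p 1 \<in> Mh \<Omega> Tr"
    using iterates_in_spaces pressure_in_Mh N_pos by auto
  have t: "1 * \<tau> \<in> {0..T}" using \<tau>_pos \<tau>_le_T by simp
  have B: "0 \<le> B" unfolding B_def using forcing_bound_nonneg nrm2_nonneg by blast
  have "ipv \<Omega> (\<lambda>x. (1 / \<tau>) *\<^sub>R (u 1 x - u 0 x)) (u 1)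
      = (nrm2v \<Omega> (u 1) - nrm2v \<Omega> (u 0) + Z) / (2 * \<tau>)"
    using euler_set_integral_identity[OF domain_fmeasurable, of "u 1" "u 0" "1 / \<tau>"]
      bounded_measurable_velocity N_pos
    by (simp add: ipv_def nrm2v_def Z_def)
  then have "(nrm2v \<Omega> (u 1) - nrm2v \<Omega> (u 0) + Z) / (2 * \<tau>) + 1 / k * gnrm2v \<Omega> (u 1)
      \<le> B / (2 * (1 / (2 * 2 * (1 + \<tau>)))) + 1 / (2 * 2 * (1 + \<tau>)) * nrm2v \<Omega> (u 1)"
    using velocity_energy_inequality[OF bounded_measurable_velocity bounded_measurable_concentration t _
        first_step_equations(1)[rule_format, OF u1 p1], of "1 / (2 * 2 * (1 + \<tau>))"] \<tau>_pos N_pos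
    unfolding B_def by simp
  then have "nrm2v \<Omega> (u 1) + 2 * \<tau> * (1 / k * gnrm2v \<Omega> (u 1))
      \<le> (1 + \<tau>) * nrm2v \<Omega> (u 0) + \<tau> * (2 * 2\<^sup>2 * (1 + \<tau>) * B)"
    using \<tau>_pos k_pos B nrm2v_nonneg gnrm2v_nonneg unfolding Z_def
    by (intro implicit_energy_step[where q = "nrm2v \<Omega> (u 1)"]) auto
  moreover have "\<tau> * (2 * 2\<^sup>2 * (1 + \<tau>) * B) \<le> \<tau> * (8 * (1 + T) * B)"
    using \<tau>_pos \<tau>_le_T B by (intro mult_left_mono mult_right_mono) auto
  moreover have "0 \<le> 2 * \<tau> * (1 / k * gnrm2v \<Omega> (u 1))"
    using \<tau>_pos k_pos gnrm2v_nonneg by simp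
  ultimately show ?thesis unfolding B_def by linarith
qed

lemma velocity_bdf2_step:
  assumes n: "1 \<le> n" "n < N"
  shows "nrm2v \<Omega> (u (n + 1)) + nrm2v \<Omega> (hatv u (n + 1)) + 2 * \<tau> * (1 / k) * gnrm2v \<Omega> (u (n + 1))
    \<le> (1 + \<tau>) * (nrm2v \<Omega> (u n) + nrm2v \<Omega> (hatv u n))
       + \<tau> * (32 * (1 + T) * forcing_bound (nrm2 \<Omega> (hats c n)))"
proof -
  define B where "B = forcing_bound (nrm2 \<Omega> (hats c n))"
  define E where "E m = nrm2v \<Omega> (u m) + nrm2v \<Omega> (hatv u m)" for m
  define Z where "Z = nrm2v \<Omega> (\<lambda>x. u (n + 1) x - 2 *\<^sub>R u n x + u (n - 1) x)"
  have v: "u (n + 1) \<in> Vh \<Omega> Tr" and q: "p (n + 1) \<in> Mh \<Omega> Tr"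
    using iterates_in_spaces pressure_in_Mh n by auto
  have t: "real (n + 1) * \<tau> \<in> {0..T}" using time_level_in_interval[of "n + 1"] n by linarith
  have B: "0 \<le> B" unfolding B_def using forcing_bound_nonneg nrm2_nonneg by blast
  have "ipv \<Omega> (\<lambda>x. (1 / (2 * \<tau>)) *\<^sub>R (3 *\<^sub>R u (n + 1) x - 4 *\<^sub>R u n x + u (n - 1) x)) (u (n + 1))
      = (E (n + 1) - E n + Z) / (4 * \<tau>)"
    using bdf2_set_integral_identity[OF domain_fmeasurable, of "u (n + 1)" "u n" "u (n - 1)" "1 / (2 * \<tau>)"]
      bounded_measurable_velocity n
    by (simp add: ipv_def nrm2v_def hatv_def E_def Z_def)
  then have "(E (n + 1) - E n + Z) / (4 * \<tau>) + 1 / k * gnrm2v \<Omega> (u (n + 1))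
      \<le> B / (2 * (1 / (2 * 4 * (1 + \<tau>)))) + 1 / (2 * 4 * (1 + \<tau>)) * nrm2v \<Omega> (u (n + 1))"
    using velocity_energy_inequality[OF bounded_measurable_velocity bounded_measurable_hats t _
        bdf2_step_equations(1)[OF n, rule_format, OF v q], of "1 / (2 * 4 * (1 + \<tau>))"] \<tau>_pos n
    unfolding B_def by simp
  then have "E (n + 1) + 4 * \<tau> * (1 / k * gnrm2v \<Omega> (u (n + 1)))
      \<le> (1 + \<tau>) * E n + \<tau> * (2 * 4\<^sup>2 * (1 + \<tau>) * B)"
    using \<tau>_pos k_pos B nrm2v_nonneg gnrm2v_nonneg unfolding Z_def E_def
    by (intro implicit_energy_step[where q = "nrm2v \<Omega> (u (n + 1))"]) auto
  moreover have "\<tau> * (2 * 4\<^sup>2 * (1 + \<tau>) * B) \<le> \<tau> * (32 * (1 + T) * B)"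
    using \<tau>_pos \<tau>_le_T B by (intro mult_left_mono mult_right_mono) auto
  moreover have "0 \<le> \<tau> * (1 / k * gnrm2v \<Omega> (u (n + 1)))"
    using \<tau>_pos k_pos gnrm2v_nonneg by simp
  moreover have "2 * \<tau> * (1 / k) * gnrm2v \<Omega> (u (n + 1)) = 2 * (\<tau> * (1 / k * gnrm2v \<Omega> (u (n + 1))))"
    "4 * \<tau> * (1 / k * gnrm2v \<Omega> (u (n + 1))) = 4 * (\<tau> * (1 / k * gnrm2v \<Omega> (u (n + 1))))"
    by simp_all
  ultimately show ?thesis unfolding B_def E_def by linarith
qed

end

context bdf2_data begin

(* Gronwall's bound exp (K T) (E^1 + T L) with K = 4 U^2 / theta, L = 4 U^2 alpha^2 |Omega| / theta,
   and the backward Euler bound on E^1 in terms of X >= |c^0|^2. *)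
definition concentration_energy_bound :: "real \<Rightarrow> real" where
  "concentration_energy_bound X = exp (4 * U\<^sup>2 / \<theta> * T)
     * (9 * ((1 + T * (2 * U\<^sup>2 / \<theta>)) * X + T * (2 * U\<^sup>2 / \<theta> * \<alpha>\<^sup>2 * measure lborel \<Omega>)) + 2 * X
        + T * (4 * U\<^sup>2 / \<theta> * \<alpha>\<^sup>2 * measure lborel \<Omega>))"

(* The analogous bound for the velocity energies, with K = 1 and a source term that controls
   the buoyancy through the concentration energy bound; Y >= |u^0|^2. *)
definition velocity_energy_bound :: "real \<Rightarrow> real \<Rightarrow> real" where
  "velocity_energy_bound X Y = exp T
     * (9 * ((1 + T) * Y + T * (8 * (1 + T) * forcing_bound X)) + 2 * Y
        + T * (32 * (1 + T) * forcing_bound (concentration_energy_bound X)))"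

end

context bdf2_run begin

lemma concentration_first_energy:
  assumes X: "nrm2 \<Omega> (c 0) \<le> X"
  shows "nrm2 \<Omega> (c 1) + nrm2 \<Omega> (hats c 1)
     \<le> 9 * ((1 + T * (2 * U\<^sup>2 / \<theta>)) * X + T * (2 * U\<^sup>2 / \<theta> * \<alpha>\<^sup>2 * measure lborel \<Omega>)) + 2 * X"
proof -
  have "(1 + \<tau> * (2 * U\<^sup>2 / \<theta>)) * nrm2 \<Omega> (c 0) \<le> (1 + T * (2 * U\<^sup>2 / \<theta>)) * X"
    "\<tau> * (2 * U\<^sup>2 / \<theta> * \<alpha>\<^sup>2 * measure lborel \<Omega>) \<le> T * (2 * U\<^sup>2 / \<theta> * \<alpha>\<^sup>2 * measure lborel \<Omega>)"
    using \<tau>_le_T \<theta>_pos T_pos X nrm2_nonneg[of \<Omega> "c 0"]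
    by (intro mult_mono mult_right_mono add_left_mono; simp)+
  then have "nrm2 \<Omega> (c 1)
      \<le> (1 + T * (2 * U\<^sup>2 / \<theta>)) * X + T * (2 * U\<^sup>2 / \<theta> * \<alpha>\<^sup>2 * measure lborel \<Omega>)"
    by (intro order_trans[OF concentration_first_step add_mono])
  moreover have "nrm2 \<Omega> (hats c 1) \<le> 8 * nrm2 \<Omega> (c 1) + 2 * X"
    using extrapolation_set_integral_le[OF domain_fmeasurable, of "c 1" "c 0"]
      bounded_measurable_concentration N_pos X by (simp add: nrm2_def ip_def hats_def)
  ultimately show ?thesis by (rule extrapolated_energy_le)
qed

lemma velocity_first_energy:
  assumes X: "nrm2 \<Omega> (c 0) \<le> X" and Y: "nrm2v \<Omega> (u 0) \<le> Y"
  shows "nrm2v \<Omega> (u 1) + nrm2v \<Omega> (hatv u 1)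
     \<le> 9 * ((1 + T) * Y + T * (8 * (1 + T) * forcing_bound X)) + 2 * Y"
proof -
  have "0 \<le> forcing_bound (nrm2 \<Omega> (c 0))"
    using forcing_bound_nonneg nrm2_nonneg by blast
  then have "(1 + \<tau>) * nrm2v \<Omega> (u 0) \<le> (1 + T) * Y"
    "\<tau> * (8 * (1 + T) * forcing_bound (nrm2 \<Omega> (c 0))) \<le> T * (8 * (1 + T) * forcing_bound X)"
    using \<tau>_le_T T_pos Y nrm2v_nonneg[of \<Omega> "u 0"] forcing_bound_mono[OF X]
    by (intro mult_mono; simp)+
  then have "nrm2v \<Omega> (u 1) \<le> (1 + T) * Y + T * (8 * (1 + T) * forcing_bound X)"
    by (intro order_trans[OF velocity_first_step add_mono])
  moreover have "nrm2v \<Omega> (hatv u 1) \<le> 8 * nrm2v \<Omega> (u 1) + 2 * Y"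
    using extrapolation_set_integral_le[OF domain_fmeasurable, of "u 1" "u 0"]
      bounded_measurable_velocity N_pos Y by (simp add: nrm2v_def ipv_def hatv_def)
  ultimately show ?thesis by (rule extrapolated_energy_le)
qed

lemma concentration_energy_estimate:
  assumes X: "nrm2 \<Omega> (c 0) \<le> X"
  shows concentration_energy_le: "\<And>n. 1 \<le> n \<Longrightarrow> n \<le> N \<Longrightarrow>
      nrm2 \<Omega> (c n) + nrm2 \<Omega> (hats c n) \<le> concentration_energy_bound X"
    and concentration_dissipation_le: "\<And>m. m < N \<Longrightarrow>
      nrm2 \<Omega> (c (m + 1)) + nrm2 \<Omega> (hats c (m + 1)) + 2 * \<tau> * \<theta> * (\<Sum>n = 1..m. gnrm2 \<Omega> (c (n + 1)))
      \<le> nrm2 \<Omega> (c 1) + nrm2 \<Omega> (hats c 1)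
         + T * (4 * U\<^sup>2 / \<theta> * concentration_energy_bound X + 4 * U\<^sup>2 / \<theta> * \<alpha>\<^sup>2 * measure lborel \<Omega>)"
proof -
  define E where "E n = nrm2 \<Omega> (c n) + nrm2 \<Omega> (hats c n)" for n
  define G L where "G = 4 * U\<^sup>2 / \<theta>" and "L = 4 * U\<^sup>2 / \<theta> * \<alpha>\<^sup>2 * measure lborel \<Omega>"
  have GL: "0 \<le> G" "0 \<le> L" unfolding G_def L_def using \<theta>_pos by simp_all
  have E_nonneg: "0 \<le> E n" for n unfolding E_def using nrm2_nonneg[of \<Omega>] by (simp add: add_nonneg_nonneg)
  define D where "D n = 2 * \<tau> * \<theta> * gnrm2 \<Omega> (c n)" for n
  have D_nonneg: "0 \<le> D n" for n
    unfolding D_def using \<tau>_pos \<theta>_pos gnrm2_nonneg[of \<Omega> "c n"] by simp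
  have step: "\<And>n. 1 \<le> n \<Longrightarrow> n < N \<Longrightarrow> E (n + 1) + D (n + 1) \<le> (1 + \<tau> * G) * E n + \<tau> * L"
    using concentration_bdf2_step unfolding E_def D_def G_def L_def by simp
  have "E 1 \<le> 9 * ((1 + T * (2 * U\<^sup>2 / \<theta>)) * X + T * (2 * U\<^sup>2 / \<theta> * \<alpha>\<^sup>2 * measure lborel \<Omega>)) + 2 * X"
    unfolding E_def by (rule concentration_first_energy[OF X])
  then have bound: "exp (G * T) * (E 1 + T * L) \<le> concentration_energy_bound X"
    unfolding concentration_energy_bound_def G_def L_def by (intro mult_left_mono add_right_mono) auto
  show "nrm2 \<Omega> (c n) + nrm2 \<Omega> (hats c n) \<le> concentration_energy_bound X" if "1 \<le> n" "n \<le> N" for n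
    using gronwall_energy_max[where E = E and D = D, OF \<tau>_pos \<tau>_times_N GL E_nonneg D_nonneg step that]
      bound unfolding E_def by simp
  show "nrm2 \<Omega> (c (m + 1)) + nrm2 \<Omega> (hats c (m + 1)) + 2 * \<tau> * \<theta> * (\<Sum>n = 1..m. gnrm2 \<Omega> (c (n + 1)))
      \<le> nrm2 \<Omega> (c 1) + nrm2 \<Omega> (hats c 1)
         + T * (4 * U\<^sup>2 / \<theta> * concentration_energy_bound X + 4 * U\<^sup>2 / \<theta> * \<alpha>\<^sup>2 * measure lborel \<Omega>)"
    if "m < N" for m
  proof -
    have "T * (G * (exp (G * T) * (E 1 + T * L)) + L) \<le> T * (G * concentration_energy_bound X + L)"
      using bound GL T_pos by (intro mult_left_mono add_right_mono) auto
    then show ?thesis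
      using gronwall_energy_sum[where E = E and D = D, OF \<tau>_pos \<tau>_times_N GL E_nonneg D_nonneg step that]
      unfolding E_def D_def G_def L_def by (simp add: sum_distrib_left mult_ac)
  qed
qed

lemma velocity_energy_estimate:
  assumes X: "nrm2 \<Omega> (c 0) \<le> X" and Y: "nrm2v \<Omega> (u 0) \<le> Y" and m: "m < N"
  shows "nrm2v \<Omega> (u (m + 1)) + nrm2v \<Omega> (hatv u (m + 1)) + 2 * \<tau> * (1 / k) * (\<Sum>n = 1..m. gnrm2v \<Omega> (u (n + 1)))
    \<le> nrm2v \<Omega> (u 1) + nrm2v \<Omega> (hatv u 1)
       + T * (velocity_energy_bound X Y + 32 * (1 + T) * forcing_bound (concentration_energy_bound X))"
proof -
  define E where "E n = nrm2v \<Omega> (u n) + nrm2v \<Omega> (hatv u n)" for n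
  define D where "D n = 2 * \<tau> * (1 / k) * gnrm2v \<Omega> (u n)" for n
  define L where "L = 32 * (1 + T) * forcing_bound (concentration_energy_bound X)"
  have "0 \<le> concentration_energy_bound X"
    using concentration_energy_le[OF X order_refl N_pos] nrm2_nonneg[of \<Omega> "c 1"] nrm2_nonneg[of \<Omega> "hats c 1"]
    by linarith
  then have L: "0 \<le> (1::real)" "0 \<le> L"
    unfolding L_def using T_pos forcing_bound_nonneg by simp_all
  have E_nonneg: "0 \<le> E n" for n unfolding E_def using nrm2v_nonneg[of \<Omega>] by (simp add: add_nonneg_nonneg)
  have D_nonneg: "0 \<le> D n" for n
    unfolding D_def using \<tau>_pos k_pos gnrm2v_nonneg[of \<Omega> "u n"] by simp
  have step: "\<And>n. 1 \<le> n \<Longrightarrow> n < N \<Longrightarrow> E (n + 1) + D (n + 1) \<le> (1 + \<tau> * 1) * E n + \<tau> * L"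
  proof -
    fix n assume n: "1 \<le> n" "n < N"
    have "nrm2 \<Omega> (hats c n) \<le> concentration_energy_bound X"
      using concentration_energy_le[OF X n(1)] n nrm2_nonneg[of \<Omega> "c n"] by simp
    then have "\<tau> * (32 * (1 + T) * forcing_bound (nrm2 \<Omega> (hats c n))) \<le> \<tau> * L"
      unfolding L_def using \<tau>_pos T_pos by (intro mult_left_mono forcing_bound_mono) auto
    then show "E (n + 1) + D (n + 1) \<le> (1 + \<tau> * 1) * E n + \<tau> * L"
      using velocity_bdf2_step[OF n] unfolding E_def D_def by simp
  qed
  have "E 1 \<le> 9 * ((1 + T) * Y + T * (8 * (1 + T) * forcing_bound X)) + 2 * Y"
    unfolding E_def by (rule velocity_first_energy[OF X Y])
  then have "exp T * (E 1 + T * L) \<le> velocity_energy_bound X Y"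
    unfolding velocity_energy_bound_def L_def by (intro mult_left_mono add_right_mono) auto
  then have "T * (exp T * (E 1 + T * L) + L) \<le> T * (velocity_energy_bound X Y + L)"
    using T_pos by (intro mult_left_mono add_right_mono) auto
  then show ?thesis
    using gronwall_energy_sum[where E = E and D = D, OF \<tau>_pos \<tau>_times_N L E_nonneg D_nonneg step m]
    unfolding E_def D_def L_def by (simp add: sum_distrib_left mult_ac)
qed

end

context bdf2_data begin

lemma energy_estimate:
  "\<exists>C>0. \<forall>Tr N u p c. bdf2_run \<Omega> \<nu> \<theta> U g \<gamma> \<alpha> k T M f u0 c0 Tr N u p c \<longrightarrow>
          (\<forall>m. 1 \<le> m \<and> m \<le> N - 1 \<longrightarrow>
             nrm2v \<Omega> (u (m + 1)) + nrm2v \<Omega> (hatv u (m + 1))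
             + nrm2 \<Omega> (c (m + 1)) + nrm2 \<Omega> (hats c (m + 1))
             + 2 * (T / real N) * (1 / k) * (\<Sum>n = 1..m. gnrm2v \<Omega> (u (n + 1)))
             + 2 * (T / real N) * \<theta> * (\<Sum>n = 1..m. gnrm2 \<Omega> (c (n + 1)))
           \<le> nrm2v \<Omega> (u 1) + nrm2v \<Omega> (hatv u 1) + nrm2 \<Omega> (c 1) + nrm2 \<Omega> (hats c 1)
             + C * (T / real N) * (\<Sum>n = 0..N - 1.
                  nrm2v \<Omega> (f (real (n + 1) * (T / real N))) + measure lborel \<Omega>))"
proof -
  obtain X Y where X: "\<And>Tr. fe_triangulation \<Omega> Tr \<Longrightarrow> nrm2 \<Omega> (Pih \<Omega> Tr c0) \<le> X"
    and Y: "\<And>Tr. fe_triangulation \<Omega> Tr \<Longrightarrow> nrm2v \<Omega> (Ih Tr u0) \<le> Y"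
    using initial_data_bounds by blast
  define K where "K = T * (4 * U\<^sup>2 / \<theta> * concentration_energy_bound X + 4 * U\<^sup>2 / \<theta> * \<alpha>\<^sup>2 * measure lborel \<Omega>)
    + T * (velocity_energy_bound X Y + 32 * (1 + T) * forcing_bound (concentration_energy_bound X))"
  define C where "C = \<bar>K\<bar> / (T * measure lborel \<Omega>) + 1"
  have "C > 0" unfolding C_def using T_pos measure_domain_pos by (simp add: add_nonneg_pos)
  moreover have "nrm2v \<Omega> (u (m + 1)) + nrm2v \<Omega> (hatv u (m + 1))
      + nrm2 \<Omega> (c (m + 1)) + nrm2 \<Omega> (hats c (m + 1))
      + 2 * (T / real N) * (1 / k) * (\<Sum>n = 1..m. gnrm2v \<Omega> (u (n + 1)))
      + 2 * (T / real N) * \<theta> * (\<Sum>n = 1..m. gnrm2 \<Omega> (c (n + 1)))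
    \<le> nrm2v \<Omega> (u 1) + nrm2v \<Omega> (hatv u 1) + nrm2 \<Omega> (c 1) + nrm2 \<Omega> (hats c 1)
      + C * (T / real N) * (\<Sum>n = 0..N - 1. nrm2v \<Omega> (f (real (n + 1) * (T / real N))) + measure lborel \<Omega>)"
    if run: "bdf2_run \<Omega> \<nu> \<theta> U g \<gamma> \<alpha> k T M f u0 c0 Tr N u p c" and m: "1 \<le> m" "m \<le> N - 1"
    for Tr N u p c m
  proof -
    interpret run: bdf2_run \<Omega> \<nu> \<theta> U g \<gamma> \<alpha> k T M f u0 c0 Tr N u p c by (fact run)
    have X0: "nrm2 \<Omega> (c 0) \<le> X" and Y0: "nrm2v \<Omega> (u 0) \<le> Y"
      using X Y run.triangulation run.initial_values by auto
    have m_lt_N: "m < N" using m run.N_pos by linarith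
    have "K \<le> C * (T / real N)
        * (\<Sum>n = 0..N - 1. nrm2v \<Omega> (f (real (n + 1) * (T / real N))) + measure lborel \<Omega>)"
      unfolding C_def using T_pos measure_domain_pos run.N_pos nrm2v_nonneg by (rule constant_le_time_sum)
    then show ?thesis
      using run.concentration_dissipation_le[OF X0 m_lt_N] run.velocity_energy_estimate[OF X0 Y0 m_lt_N]
      unfolding run.\<tau>_def K_def by linarith
  qed
  ultimately show ?thesis by blast
qed

end

theorem theorem3p1:
  fixes \<Omega> :: "pt set" and \<nu> :: "real \<Rightarrow> real"
    and \<theta> U g \<gamma> \<alpha> k \<beta> T \<sigma> :: real
    and f :: "real \<Rightarrow> pt \<Rightarrow> pt" and u0 :: "pt \<Rightarrow> pt" and c0 :: "pt \<Rightarrow> real"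
  assumes dom: "open \<Omega>" "bounded \<Omega>" "connected \<Omega>" "\<Omega> \<noteq> {}"
    and params: "\<theta> > 0" "U > 0" "k \<ge> 1" "\<beta> > 0" "T > 0" "\<sigma> > 0"
    and nu_smooth: "\<forall>j x. ((deriv ^^ j) \<nu>) differentiable (at x)"
    and nu_bounds: "\<forall>s. 1 / k \<le> \<nu> s \<and> \<nu> s \<le> k"
    and nu_deriv: "\<forall>s. \<bar>deriv \<nu> s\<bar> \<le> \<beta>"
    and f_Linf: "\<exists>M. \<forall>t\<in>{0..T}. (\<forall>i. L2 \<Omega> (vcomp (f t) i)) \<and> nrm2v \<Omega> (f t) \<le> M"
    and u0_H2: "\<forall>i. H2 \<Omega> (vcomp u0 i)"
    and u0_cont: "continuous_on (closure \<Omega>) u0"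
    and u0_trace: "\<forall>x\<in>frontier \<Omega>. u0 x = 0"
    and u0_div: "\<exists>g1 g2. weak_pd \<Omega> (vcomp u0 1) 1 g1 \<and> weak_pd \<Omega> (vcomp u0 2) 2 g2
                   \<and> (AE x in lborel. x \<in> \<Omega> \<longrightarrow> g1 x + g2 x = 0)"
    and c0_H2: "H2 \<Omega> c0"
    and c0_cont: "continuous_on (closure \<Omega>) c0"
    and c0_mean: "(LINT x:\<Omega>|lborel. c0 x) = 0"
  shows "\<exists>C>0. \<forall>Tr N u p c. fe_triangulation \<Omega> Tr \<and> quasi_uniform \<sigma> Tr \<and> N \<ge> 1
           \<and> bdf2_solution \<Omega> \<nu> \<alpha> \<theta> U g \<gamma> f u0 c0 T Tr N u p c \<longrightarrow>
          (\<forall>m. 1 \<le> m \<and> m \<le> N - 1 \<longrightarrow>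
             nrm2v \<Omega> (u (m + 1)) + nrm2v \<Omega> (hatv u (m + 1))
             + nrm2 \<Omega> (c (m + 1)) + nrm2 \<Omega> (hats c (m + 1))
             + 2 * (T / real N) * (1 / k) * (\<Sum>n = 1..m. gnrm2v \<Omega> (u (n + 1)))
             + 2 * (T / real N) * \<theta> * (\<Sum>n = 1..m. gnrm2 \<Omega> (c (n + 1)))
           \<le> nrm2v \<Omega> (u 1) + nrm2v \<Omega> (hatv u 1) + nrm2 \<Omega> (c 1) + nrm2 \<Omega> (hats c 1)
             + C * (T / real N) * (\<Sum>n = 0..N - 1.
                  nrm2v \<Omega> (f (real (n + 1) * (T / real N))) + measure lborel \<Omega>))"
proof -
  obtain M where M: "\<And>t. t \<in> {0..T} \<Longrightarrow> (\<forall>i. L2 \<Omega> (vcomp (f t) i)) \<and> nrm2v \<Omega> (f t) \<le> M"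
    using f_Linf by blast
  have "continuous_on UNIV \<nu>"
    using nu_smooth[rule_format, of 0]
    by (simp add: differentiable_imp_continuous_within continuous_at_imp_continuous_on)
  then interpret data: bdf2_data \<Omega> \<nu> \<theta> U g \<gamma> \<alpha> k T M f u0 c0
    using dom params nu_bounds M u0_cont c0_cont by unfold_locales auto
  have "bdf2_run \<Omega> \<nu> \<theta> U g \<gamma> \<alpha> k T M f u0 c0 Tr N u p c"
    if "fe_triangulation \<Omega> Tr" "N \<ge> 1" "bdf2_solution \<Omega> \<nu> \<alpha> \<theta> U g \<gamma> f u0 c0 T Tr N u p c" for Tr N u p c
    using that by (intro bdf2_run.intro data.bdf2_data_axioms bdf2_run_axioms.intro)
  with data.energy_estimate show ?thesis by blast
qed

end
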